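(* Let $m\ge1$, $P_m(z)=\sum_{j=0}^m \frac{(2m-j)!}{j!(m-j)!}z^j$ and $R_m(z)=P_m(z)/P_m(-z)$. The solutions $\hat z_j(t,0)$, $j=1,\dots,m$, of $R_m(z)=e^t$, $t\in\mathbb{C}$, can be labelled so that as $|t|\to 0$ $$\hat z_1(t,0)=t+\mathcal{O}(t^{2m+1}),\qquad \hat z_{2\ell}(t,0)=\mathrm{i}r_\ell+\delta_\ell t+\mathcal{O}(t^2),\qquad \hat z_{2\ell+1}(t,0)=-\mathrm{i}r_\ell+\delta_\ell t+\mathcal{O}(t^2)$$ for $\ell=1,\dots,\lceil m/2\rceil-1$, with $r_\ell\in\mathbb{R}$ and $\delta_\ell>1$. If $m$ is even, these give $m-1$ of the solutions, and the remaining one satisfies $$\hat z_m(t,0)=\frac{D_m}{t}+\mathcal{O}(1)\qquad\text{as }|t|\to0,$$ for some constant $D_m>0$.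
   Context: $R_m$ is the stability function of the $m$-stage Gauss Runge–Kutta method (the $(m,m)$-Padé approximant of $e^z$). The numbers $\pm\mathrm{i}r_\ell$ are the nonzero zeros of $P_m(z)-P_m(-z)$. *)

theory Defs
  imports Complex_Main "HOL-Library.Landau_Symbols"
begin

text \<open>Numerator of the (m,m)-Pade approximant of exp.\<close>
definition Pm :: "nat \<Rightarrow> complex \<Rightarrow> complex" where
  "Pm m z = (\<Sum>j=0..m. (fact (2*m - j) / (fact j * fact (m - j))) * z ^ j)"

text \<open>Stability function of the m-stage Gauss method.\<close>
definition Rm :: "nat \<Rightarrow> complex \<Rightarrow> complex" where
  "Rm m z = Pm m z / Pm m (-z)"

definition gauss_sols :: "nat \<Rightarrow> complex \<Rightarrow> complex set" where
  "gauss_sols m t = {z. Pm m (-z) \<noteq> 0 \<and> Rm m z = exp t}"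

end

theory Submission
  imports Defs "HOL-Complex_Analysis.Complex_Analysis" "HOL-Computational_Algebra.Polynomial"
begin

definition pade_coeff :: "nat \<Rightarrow> nat \<Rightarrow> real" where
  "pade_coeff m j = (if j \<le> m then fact (2*m - j) / (fact j * fact (m - j)) else 0)"

lemma pade_coeff_closed: "pade_coeff (j + a) j = fact (j + 2*a) / (fact j * fact a)"
  by (simp add: pade_coeff_def mult_2 add_ac)

lemma pade_coeff_above: "m < j \<Longrightarrow> pade_coeff m j = 0"
  by (simp add: pade_coeff_def)

lemma pade_coeff_pos: "j \<le> m \<Longrightarrow> pade_coeff m j > 0"
  by (simp add: pade_coeff_def)

lemma pade_coeff_rec:
  "pade_coeff (n+2) j = 2*(2*n+3) * pade_coeff (n+1) j + (if 2 \<le> j then pade_coeff n (j-2) else 0)"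
proof (cases "j \<le> n")
  case False
  then consider "j = n + 1" | "j = n + 2" | "n + 2 < j" by linarith
  then show ?thesis
  proof cases
    case 1
    show ?thesis
    proof (cases n)
      case (Suc k)
      have "pade_coeff (k+2 + 1) (k+2) = 2*(2*(k+1)+3) * pade_coeff (k+2 + 0) (k+2) + pade_coeff (k + 1) k"
        unfolding pade_coeff_closed
        by (simp add: fact_Suc numeral_eq_Suc divide_simps add_pos_nonneg; simp add: algebra_simps)
      then show ?thesis using 1 Suc by (simp add: add_ac)
    qed (use 1 in \<open>simp add: pade_coeff_def fact_numeral\<close>)
  qed (simp_all add: pade_coeff_def)
next
  case True
  then obtain b where n: "n = j + b" by (metis le_add_diff_inverse)
  consider "j = 0" | "j = 1" | i where "j = i + 2" by (metis One_nat_def add_2_eq_Suc' not0_implies_Suc)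
  then show ?thesis
  proof cases
    case 1
    have "pade_coeff (0 + (b+2)) 0 = 2*(2*b+3) * pade_coeff (0 + (b+1)) 0"
      unfolding pade_coeff_closed
      by (simp add: fact_Suc numeral_eq_Suc divide_simps add_pos_nonneg; simp add: algebra_simps)
    then show ?thesis using 1 n by (simp add: add_ac)
  next
    case 2
    have "pade_coeff (1 + (b+2)) 1 = 2*(2*(b+1)+3) * pade_coeff (1 + (b+1)) 1"
      unfolding pade_coeff_closed
      by (simp add: fact_Suc numeral_eq_Suc divide_simps add_pos_nonneg; simp add: algebra_simps)
    then show ?thesis using 2 n by (simp add: add_ac)
  next
    case 3
    have "pade_coeff ((i+2) + (b+2)) (i+2)
        = 2*(2*(i+2+b)+3) * pade_coeff ((i+2) + (b+1)) (i+2) + pade_coeff (i + (b+2)) i"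
      unfolding pade_coeff_closed
      by (simp add: fact_Suc numeral_eq_Suc divide_simps add_pos_nonneg; simp add: algebra_simps)
    then show ?thesis using 3 n by (simp add: add_ac)
  qed
qed

lemma pade_coeff_deriv:
  "2 * real (j+1) * pade_coeff (n+1) (j+1) = pade_coeff (n+1) j - (if 1 \<le> j then pade_coeff n (j-1) else 0)"
proof (cases "j \<le> n")
  case False
  then consider "j = n + 1" | "n + 1 < j" by linarith
  then show ?thesis by cases (simp_all add: pade_coeff_def)
next
  case True
  then obtain b where n: "n = j + b" by (metis le_add_diff_inverse)
  show ?thesis
  proof (cases j)
    case 0
    have "2 * pade_coeff (1 + b) 1 = pade_coeff (0 + (b + 1)) 0"
      unfolding pade_coeff_closed
      by (simp add: fact_Suc numeral_eq_Suc divide_simps add_pos_nonneg; simp add: algebra_simps)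
    then show ?thesis using 0 n by simp
  next
    case (Suc i)
    have "2 * real (i+2) * pade_coeff ((i+2) + b) (i+2) = pade_coeff ((i+1) + (b+1)) (i+1) - pade_coeff (i + (b+1)) i"
      unfolding pade_coeff_closed
      by (simp add: fact_Suc numeral_eq_Suc divide_simps add_pos_nonneg; simp add: algebra_simps)
    then show ?thesis using Suc n by (simp add: add_ac)
  qed
qed

definition pade_poly :: "nat \<Rightarrow> complex poly" where
  "pade_poly m = (\<Sum>j\<le>m. monom (of_real (pade_coeff m j)) j)"

lemma coeff_pade_poly: "coeff (pade_poly m) j = of_real (pade_coeff m j)"
  by (simp add: pade_poly_def coeff_sum coeff_monom pade_coeff_def)

lemma poly_pade_poly: "poly (pade_poly m) z = Pm m z"
  by (simp add: pade_poly_def Pm_def poly_sum poly_monom pade_coeff_def atLeast0AtMost)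

lemma degree_pade_poly: "degree (pade_poly m) = m"
proof (rule order_antisym)
  show "degree (pade_poly m) \<le> m"
    by (rule degree_le) (simp add: coeff_pade_poly pade_coeff_above)
  show "m \<le> degree (pade_poly m)"
    by (rule le_degree) (simp add: coeff_pade_poly pade_coeff_def)
qed

lemma lead_coeff_pade_poly: "lead_coeff (pade_poly m) = 1"
  by (simp add: degree_pade_poly coeff_pade_poly pade_coeff_def)

lemma pade_poly_rec:
  "pade_poly (n+2) = smult (of_real (2*(2*n+3))) (pade_poly (n+1)) + monom 1 2 * pade_poly n"
proof (rule poly_eqI)
  fix j
  have "(of_real (pade_coeff (n+2) j) :: complex) = of_real (2*(2*real n+3)) * of_real (pade_coeff (n+1) j)
      + (if 2 \<le> j then of_real (pade_coeff n (j-2)) else 0)"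
    using pade_coeff_rec[of n j] by simp
  moreover have "coeff (monom 1 2 * pade_poly n) j = (if 2 \<le> j then of_real (pade_coeff n (j-2)) else 0)"
    by (simp add: coeff_monom_mult coeff_pade_poly)
  ultimately show "coeff (pade_poly (n+2)) j = coeff (smult (of_real (2*(2*n+3))) (pade_poly (n+1)) + monom 1 2 * pade_poly n) j"
    unfolding coeff_add coeff_smult coeff_pade_poly by (simp add: algebra_simps)
qed

lemma pderiv_pade_poly: "smult 2 (pderiv (pade_poly (n+1))) = pade_poly (n+1) - pCons 0 (pade_poly n)"
proof (rule poly_eqI)
  fix j
  have "(of_real (2 * real (j+1) * pade_coeff (n+1) (j+1)) :: complex)
      = of_real (pade_coeff (n+1) j - (if 1 \<le> j then pade_coeff n (j-1) else 0))"
    by (simp only: pade_coeff_deriv)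
  then show "coeff (smult 2 (pderiv (pade_poly (n+1)))) j = coeff (pade_poly (n+1) - pCons 0 (pade_poly n)) j"
    by (cases j) (simp_all add: coeff_pderiv coeff_pade_poly algebra_simps)
qed

lemma Pm_0 [simp]: "Pm 0 z = 1"
  by (simp add: Pm_def)

lemma Pm_Suc_0: "Pm (Suc 0) z = 2 + z"
  by (simp add: Pm_def)

lemma Pm_at_0: "Pm m 0 = of_real (pade_coeff m 0)"
  by (simp add: poly_pade_poly[symmetric] poly_0_coeff_0 coeff_pade_poly)

lemma Pm_at_0_nonzero: "Pm m 0 \<noteq> 0"
  using pade_coeff_pos[of 0 m] by (simp add: Pm_at_0)

lemma cnj_Pm: "cnj (Pm m z) = Pm m (cnj z)"
  by (simp add: Pm_def)

lemma continuous_on_Pm: "continuous_on A (Pm m)"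
  unfolding Pm_def by (intro continuous_intros)

lemma Pm_rec: "Pm (n+2) z = 2 * (2 * of_nat n + 3) * Pm (n+1) z + z^2 * Pm n z"
  using arg_cong[OF pade_poly_rec, of "\<lambda>p. poly p z"] by (simp add: poly_pade_poly poly_monom)

definition dPm :: "nat \<Rightarrow> complex \<Rightarrow> complex" where
  "dPm m z = poly (pderiv (pade_poly m)) z"

lemma Pm_has_field_derivative: "(Pm m has_field_derivative dPm m z) (at z within S)"
proof -
  have "Pm m = poly (pade_poly m)" by (simp add: fun_eq_iff poly_pade_poly)
  then show ?thesis unfolding dPm_def by (metis poly_DERIV has_field_derivative_at_within)
qed

lemma dPm_Suc: "2 * dPm (n+1) z = Pm (n+1) z - z * Pm n z"
  using arg_cong[OF pderiv_pade_poly, of "\<lambda>p. poly p z"] by (simp add: dPm_def poly_pade_poly)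

lemma Pm_wronskian: "Pm (n+1) z * Pm n (-z) - Pm n z * Pm (n+1) (-z) = 2 * (-1)^n * z^(2*n+1)"
proof (induction n)
  case 0
  then show ?case by (simp add: Pm_Suc_0)
next
  case (Suc n)
  have "Pm (Suc n+1) z * Pm (Suc n) (-z) - Pm (Suc n) z * Pm (Suc n+1) (-z)
      = - (z^2) * (Pm (n+1) z * Pm n (-z) - Pm n z * Pm (n+1) (-z))"
    using Pm_rec[of n z] Pm_rec[of n "-z"] by (simp add: algebra_simps)
  also have "\<dots> = 2 * (-1)^(Suc n) * z^(2*Suc n+1)"
    unfolding Suc.IH by (simp add: algebra_simps power_add power2_eq_square)
  finally show ?case .
qed

text \<open>This is the defining property of the Pade approximant: it makes
  \<open>d/dz (R\<^sub>m(z) e\<^sup>-\<^sup>z)\<close> vanish to order \<open>2m\<close> at the origin.\<close>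
lemma Pm_deriv_identity:
  assumes "m \<ge> 1"
  shows "dPm m z * Pm m (-z) + Pm m z * dPm m (-z) - Pm m z * Pm m (-z) = (-1)^(m+1) * z^(2*m)"
proof -
  obtain n where m: "m = n+1" using assms by (metis add.commute le_Suc_ex)
  have "2 * (dPm m z * Pm m (-z) + Pm m z * dPm m (-z) - Pm m z * Pm m (-z))
      = (2 * dPm (n+1) z) * Pm m (-z) + Pm m z * (2 * dPm (n+1) (-z)) - 2 * Pm m z * Pm m (-z)"
    unfolding m by (simp add: algebra_simps)
  also have "\<dots> = z * (Pm (n+1) z * Pm n (-z) - Pm n z * Pm (n+1) (-z))"
    unfolding dPm_Suc m by (simp add: algebra_simps)
  also have "\<dots> = 2 * ((-1)^(m+1) * z^(2*m))"
    unfolding Pm_wronskian m by (simp add: algebra_simps power_add)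
  finally show ?thesis by (subst (asm) mult_cancel_left) simp
qed

lemma Pm_no_common_zero: "Pm m z \<noteq> 0 \<or> Pm m (-z) \<noteq> 0"
proof (cases m)
  case (Suc n)
  show ?thesis
  proof (rule ccontr)
    assume zeros: "\<not> ?thesis"
    then have "2 * (-1)^n * z^(2*n+1) = 0"
      using Pm_wronskian[of n z] Suc by simp
    then have "z = 0" by auto
    then show False using zeros Pm_at_0_nonzero by simp
  qed
qed simp

lemma Pm_imag_nonzero: "Pm m (\<i> * of_real y) \<noteq> 0"
proof -
  have "Pm m (- (\<i> * of_real y)) = cnj (Pm m (\<i> * of_real y))" by (simp add: cnj_Pm)
  then show ?thesis using Pm_no_common_zero[of m "\<i> * of_real y"] by auto
qed

lemma Im_Pm_Suc_mult_cnj: "Im (Pm (n+1) (\<i> * of_real y) * cnj (Pm n (\<i> * of_real y))) = y^(2*n+1)"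
proof -
  let ?w = "Pm (n+1) (\<i> * of_real y) * cnj (Pm n (\<i> * of_real y))"
  have "\<i>^(2*n+1) = (\<i>^2)^n * \<i>" by (simp only: power_add power_mult power_one_right)
  then have i_pow: "(\<i> * complex_of_real y)^(2*n+1) = (-1)^n * \<i> * of_real (y^(2*n+1))"
    by (simp add: power_mult_distrib)
  have "?w - cnj ?w = 2 * (-1)^n * (\<i> * of_real y)^(2*n+1)"
    using Pm_wronskian[of n "\<i> * of_real y"] by (simp add: cnj_Pm) (simp add: algebra_simps)
  also have "\<dots> = 2 * ((-1)^n * (-1)^n) * \<i> * of_real (y^(2*n+1))"
    unfolding i_pow by (simp add: algebra_simps)
  also have "(-1::complex)^n * (-1)^n = 1"
    by (simp add: power_add[symmetric])
  finally have "complex_of_real (2 * Im ?w) * \<i> = complex_of_real (2 * y^(2*n+1)) * \<i>"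
    unfolding complex_diff_cnj by simp
  then have "2 * Im ?w = 2 * y^(2*n+1)"
    by (metis mult_cancel_right complex_i_not_zero of_real_eq_iff)
  then show ?thesis by linarith
qed

lemma open_Pm_neg_nonzero: "open {z. Pm m (-z) \<noteq> 0}"
  by (rule open_Collect_neq) (auto intro!: continuous_on_compose2[OF continuous_on_Pm] continuous_intros)

lemma Rm_has_field_derivative_quotient:
  assumes "Pm m (-z) \<noteq> 0"
  shows "(Rm m has_field_derivative (dPm m z * Pm m (-z) + Pm m z * dPm m (-z)) / Pm m (-z)^2) (at z within S)"
proof -
  have "((\<lambda>z. Pm m (-z)) has_field_derivative dPm m (-z) * (-1)) (at z within S)"
    by (rule DERIV_chain2[OF Pm_has_field_derivative]) (auto intro!: derivative_eq_intros)
  from DERIV_divide[OF Pm_has_field_derivative this assms]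
  show ?thesis unfolding Rm_def by (simp add: power2_eq_square fun_eq_iff)
qed

lemma Rm_holomorphic: "Rm m holomorphic_on {z. Pm m (-z) \<noteq> 0}"
  using Rm_has_field_derivative_quotient
  by (auto simp: holomorphic_on_def field_differentiable_def)

lemma Rm_has_field_derivative:
  assumes "m \<ge> 1" "Pm m (-z) \<noteq> 0"
  shows "(Rm m has_field_derivative Rm m z + (-1)^(m+1) * z^(2*m) / Pm m (-z)^2) (at z within S)"
proof -
  have "(dPm m z * Pm m (-z) + Pm m z * dPm m (-z)) / Pm m (-z)^2
      = (Pm m z * Pm m (-z) + (-1)^(m+1) * z^(2*m)) / Pm m (-z)^2"
    using Pm_deriv_identity[OF assms(1), of z] by (simp add: algebra_simps)
  also have "\<dots> = Rm m z + (-1)^(m+1) * z^(2*m) / Pm m (-z)^2"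
    using assms(2) by (simp add: Rm_def field_simps power2_eq_square)
  finally show ?thesis using Rm_has_field_derivative_quotient[OF assms(2)] by simp
qed

lemma deriv_Rm_at_fixed_point:
  assumes "m \<ge> 1" "Pm m a = Pm m (-a)"
  shows "deriv (Rm m) a = 1 + (-1)^(m+1) * a^(2*m) / Pm m a ^ 2"
proof -
  have "Pm m a \<noteq> 0" using assms(2) Pm_no_common_zero[of m a] by auto
  then show ?thesis
    using DERIV_imp_deriv[OF Rm_has_field_derivative[OF assms(1)]] assms(2) by (simp add: Rm_def)
qed

lemma Rm_mult_exp_has_field_derivative:
  assumes "m \<ge> 1" "Pm m (-z) \<noteq> 0"
  shows "((\<lambda>w. Rm m w * exp (-w)) has_field_derivative
           (-1)^(m+1) * z^(2*m) * exp (-z) / Pm m (-z)^2) (at z within S)"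
proof -
  have "((\<lambda>w. Rm m w * exp (-w)) has_field_derivative
        Rm m z * (exp (-z) * (-1)) + (Rm m z + (-1)^(m+1) * z^(2*m) / Pm m (-z)^2) * exp (-z)) (at z within S)"
    by (intro DERIV_mult' Rm_has_field_derivative assms DERIV_chain2[OF DERIV_exp])
       (auto intro!: derivative_eq_intros)
  then show ?thesis by (simp add: algebra_simps)
qed

lemma Rm_mult_exp_bigo:
  assumes "m \<ge> 1"
  shows "(\<lambda>z. Rm m z * exp (-z) - 1) \<in> O[nhds 0](\<lambda>z. z^(2*m+1))"
proof -
  have "0 \<in> {z. Pm m (-z) \<noteq> 0}" by (simp add: Pm_at_0_nonzero)
  then obtain \<rho> where \<rho>: "\<rho> > 0" "cball 0 \<rho> \<subseteq> {z. Pm m (-z) \<noteq> 0}"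
    using open_Pm_neg_nonzero open_contains_cball by blast
  define k where "k w = exp (-w) / Pm m (-w)^2" for w
  have "continuous_on (cball 0 \<rho>) k"
    unfolding k_def using \<rho>(2)
    by (auto intro!: continuous_intros continuous_on_compose2[OF continuous_on_Pm])
  then obtain B where B: "\<And>w. w \<in> cball 0 \<rho> \<Longrightarrow> norm (k w) \<le> B"
    using compact_continuous_image[of "cball 0 \<rho>" k] compact_imp_bounded
    by (fastforce simp: bounded_iff)
  have bound: "norm (Rm m z * exp (-z) - 1) \<le> B * norm (z^(2*m+1))" if z: "z \<in> ball 0 \<rho>" for z
  proof -
    have sub: "cball 0 (norm z) \<subseteq> cball 0 \<rho>" using z by auto
    have "norm (Rm m z * exp (-z) - Rm m 0 * exp (-0)) \<le> B * norm z ^ (2*m) * norm (z - 0)"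
    proof (rule field_differentiable_bound[OF convex_cball])
      fix w :: complex assume w: "w \<in> cball 0 (norm z)"
      then have "Pm m (-w) \<noteq> 0" using sub \<rho>(2) by blast
      then show "((\<lambda>w. Rm m w * exp (-w)) has_field_derivative (-1)^(m+1) * w^(2*m) * k w)
                   (at w within cball 0 (norm z))"
        using Rm_mult_exp_has_field_derivative[OF assms] by (simp add: k_def)
      have "norm (k w) \<le> B" using B w sub by blast
      moreover have "norm w ^ (2*m) \<le> norm z ^ (2*m)" using w by (simp add: power_mono)
      ultimately show "norm ((-1)^(m+1) * w^(2*m) * k w) \<le> B * norm z ^ (2*m)"
        by (simp add: norm_mult norm_power mult.commute mult_mono')
    qed (use z in auto)
    then show ?thesis by (simp add: Rm_def Pm_at_0_nonzero norm_mult norm_power mult_ac)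
  qed
  have "\<forall>\<^sub>F z in nhds 0. z \<in> ball 0 \<rho>"
    using \<rho>(1) by (intro eventually_nhds_in_open) auto
  then have "\<forall>\<^sub>F z in nhds 0. norm (Rm m z * exp (-z) - 1) \<le> B * norm (z^(2*m+1))"
    by (rule eventually_mono) (rule bound)
  then show ?thesis by (rule bigoI)
qed

lemma Pm_eq_reflect_poly: "z \<noteq> 0 \<Longrightarrow> Pm m z = z^m * poly (reflect_poly (pade_poly m)) (1/z)"
  by (simp add: poly_reflect_poly_nz degree_pade_poly poly_pade_poly field_simps)

definition is_phase :: "(real \<Rightarrow> complex) \<Rightarrow> (real \<Rightarrow> real) \<Rightarrow> bool" where
  "is_phase f \<phi> \<longleftrightarrow> continuous_on {0..} \<phi> \<and> \<phi> 0 = 0 \<and> (\<forall>y\<ge>0. f y = of_real (norm (f y)) * cis (\<phi> y))"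

lemma is_phaseD:
  assumes "is_phase f \<phi>"
  shows "continuous_on {0..} \<phi>" "\<phi> 0 = 0" "\<And>y. y \<ge> 0 \<Longrightarrow> f y = of_real (norm (f y)) * cis (\<phi> y)"
  using assms by (simp_all add: is_phase_def)

lemma phase_exists:
  assumes f: "continuous_on {0..} f" "\<And>y. y \<ge> 0 \<Longrightarrow> f y \<noteq> 0" and f0: "f 0 = of_real c" "c > 0"
  shows "\<exists>\<phi>. is_phase f \<phi>"
proof -
  obtain h where h: "continuous_on {0::real..} h" "\<And>y. y \<in> {0..} \<Longrightarrow> f y = exp (h y)"
    using continuous_logarithm_on_contractible[OF f(1) convex_imp_contractible[OF convex_real_interval(1)]] f(2)
    by auto
  have polar: "f y = of_real (norm (f y)) * cis (Im (h y))" if "y \<ge> 0" for y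
    using h(2)[of y] that by (simp add: exp_eq_polar norm_mult)
  have "cis (Im (h 0)) = 1"
    using polar[of 0] f0 by (simp add: field_simps)
  then have "f y = of_real (norm (f y)) * cis (Im (h y) - Im (h 0))" if "y \<ge> 0" for y
    using polar[OF that] by (simp add: cis_divide[symmetric])
  moreover have "continuous_on {0..} (\<lambda>y. Im (h y) - Im (h 0))"
    by (intro continuous_intros continuous_on_Im h)
  ultimately show ?thesis unfolding is_phase_def by (intro exI[of _ "\<lambda>y. Im (h y) - Im (h 0)"]) simp
qed

lemma continuous_on_nonneg_stays_between:
  fixes \<psi> :: "real \<Rightarrow> real"
  assumes "continuous_on {0..} \<psi>" "a < \<psi> 0" "\<psi> 0 < b" "\<And>y. y \<ge> 0 \<Longrightarrow> \<psi> y \<noteq> a \<and> \<psi> y \<noteq> b"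
    and y: "y \<ge> 0"
  shows "a < \<psi> y \<and> \<psi> y < b"
proof (rule ccontr)
  have c: "continuous_on {0..y} \<psi>" using assms(1) by (rule continuous_on_subset) auto
  assume "\<not> (a < \<psi> y \<and> \<psi> y < b)"
  then consider "\<psi> y \<le> a" | "b \<le> \<psi> y" by linarith
  then show False
  proof cases
    case 1
    then obtain x where "0 \<le> x" "\<psi> x = a" using IVT2'[of \<psi> y a 0] c y assms(2) by auto
    then show False using assms(4) by auto
  next
    case 2
    then obtain x where "0 \<le> x" "\<psi> x = b" using IVT'[of \<psi> 0 b y] c y assms(3) by auto
    then show False using assms(4) by auto
  qed
qed

lemma phase_of_one:
  assumes "is_phase (\<lambda>_. 1) \<phi>" "y \<ge> 0"
  shows "\<phi> y = 0"
proof -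
  have cs: "cos (\<phi> y) = 1 \<and> sin (\<phi> y) = 0" if "y \<ge> 0" for y
    using is_phaseD(3)[OF assms(1) that] by (metis cis.sel mult_1 norm_one of_real_1 one_complex.sel)
  have "- pi < \<phi> y \<and> \<phi> y < pi"
  proof (rule continuous_on_nonneg_stays_between[OF is_phaseD(1)[OF assms(1)]])
    show "\<phi> y \<noteq> - pi \<and> \<phi> y \<noteq> pi" if "y \<ge> 0" for y
      using cs[OF that] by auto
  qed (use is_phaseD(2)[OF assms(1)] assms(2) in auto)
  then show ?thesis using cs[OF assms(2)] sin_eq_0_pi by blast
qed

lemma phase_difference_bounds:
  assumes f: "is_phase f \<phi>" and g: "is_phase g \<psi>"
    and pos: "\<And>y. y > 0 \<Longrightarrow> Im (f y * cnj (g y)) > 0" and y: "y \<ge> 0"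
  shows "0 \<le> \<phi> y - \<psi> y \<and> \<phi> y - \<psi> y \<le> pi"
proof -
  have sin_pos: "sin (\<phi> y - \<psi> y) > 0" if "y > 0" for y
  proof -
    have "f y * cnj (g y) = of_real (norm (f y)) * cis (\<phi> y) * cnj (of_real (norm (g y)) * cis (\<psi> y))"
      using is_phaseD(3)[OF f] is_phaseD(3)[OF g] that by (intro arg_cong2[where f = "\<lambda>a b. a * cnj b"]) auto
    also have "\<dots> = of_real (norm (f y) * norm (g y)) * cis (\<phi> y - \<psi> y)"
      by (simp add: cis_cnj cis_mult)
    finally have "norm (f y) * norm (g y) * sin (\<phi> y - \<psi> y) > 0" using pos[OF that] by simp
    moreover have "norm (f y) * norm (g y) \<ge> 0" by simp
    ultimately show ?thesis by (metis mult_nonneg_nonpos not_less)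
  qed
  have cont: "continuous_on {0..} (\<lambda>y. \<phi> y - \<psi> y)" and zero: "\<phi> 0 - \<psi> 0 = 0"
    using is_phaseD[OF f] is_phaseD[OF g] by (auto intro!: continuous_intros)
  have "- pi < \<phi> y - \<psi> y \<and> \<phi> y - \<psi> y < pi"
  proof (rule continuous_on_nonneg_stays_between[OF cont, unfolded zero])
    show "\<phi> y - \<psi> y \<noteq> - pi \<and> \<phi> y - \<psi> y \<noteq> pi" if "y \<ge> 0" for y
      using sin_pos[of y] zero that by (cases "y = 0") auto
  qed (use y in auto)
  moreover have "0 \<le> \<phi> y - \<psi> y"
  proof (cases "y = 0")
    case False
    show ?thesis
    proof (rule ccontr)
      assume "\<not> 0 \<le> \<phi> y - \<psi> y"
      then have "0 \<le> sin (- (\<phi> y - \<psi> y))"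
        using \<open>- pi < \<phi> y - \<psi> y \<and> _\<close> by (intro sin_ge_zero) auto
      then have "sin (\<phi> y - \<psi> y) \<le> 0" by (simp only: sin_minus)
      then show False using sin_pos[of y] False y by simp
    qed
  qed (use zero in simp)
  ultimately show ?thesis by linarith
qed

lemma cos_phase_tendsto:
  assumes "is_phase f \<phi>" "\<And>y. y \<ge> 0 \<Longrightarrow> f y \<noteq> 0"
    and lim: "((\<lambda>y. f y / of_real (norm (f y))) \<longlongrightarrow> cis \<beta>) at_top"
  shows "((\<lambda>y. cos (\<phi> y - \<beta>)) \<longlongrightarrow> 1) at_top"
proof -
  have "((\<lambda>y. Re (f y / of_real (norm (f y)) * cis (-\<beta>))) \<longlongrightarrow> Re (cis \<beta> * cis (-\<beta>))) at_top"
    by (intro tendsto_intros lim)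
  moreover have "\<forall>\<^sub>F y in at_top. Re (f y / of_real (norm (f y)) * cis (-\<beta>)) = cos (\<phi> y - \<beta>)"
  proof (rule eventually_mono[OF eventually_ge_at_top[of 0]])
    fix y :: real assume y: "y \<ge> 0"
    then have "f y / of_real (norm (f y)) = cis (\<phi> y)"
      using is_phaseD(3)[OF assms(1) y] assms(2)[OF y]
      by (metis nonzero_mult_div_cancel_left norm_eq_zero of_real_eq_0_iff)
    then show "Re (f y / of_real (norm (f y)) * cis (-\<beta>)) = cos (\<phi> y - \<beta>)"
      by (simp add: cis_mult)
  qed
  ultimately show ?thesis by (simp add: cis_mult Lim_transform_eventually)
qed

lemma phase_tendsto_step:
  fixes \<phi> \<phi>0 :: "real \<Rightarrow> real"
  assumes lim0: "(\<phi>0 \<longlongrightarrow> \<beta>) at_top"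
    and bnd: "\<forall>y\<ge>0. 0 \<le> \<phi> y - \<phi>0 y \<and> \<phi> y - \<phi>0 y \<le> pi"
    and cosl: "((\<lambda>y. cos (\<phi> y - (\<beta> + pi/2))) \<longlongrightarrow> 1) at_top"
  shows "(\<phi> \<longlongrightarrow> \<beta> + pi/2) at_top"
proof (rule tendstoI)
  fix e :: real assume e: "e > 0"
  define e' where "e' = min e (pi/2)"
  have e': "0 < e'" "e' \<le> e" "e' \<le> pi/2" using e by (auto simp: e'_def)
  have ce: "cos e' < 1" using cos_monotone_0_pi[of 0 e'] e' by simp
  have ev1: "eventually (\<lambda>y. dist (\<phi>0 y) \<beta> < pi/2) at_top" by (rule tendstoD[OF lim0]) simp
  have ev2: "eventually (\<lambda>y. cos e' < cos (\<phi> y - (\<beta>+pi/2))) at_top"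
    using order_tendstoD(1)[OF cosl ce] .
  have ev3: "eventually (\<lambda>y. y \<ge> (0::real)) at_top" by (rule eventually_ge_at_top)
  from ev1 ev2 ev3 show "eventually (\<lambda>y. dist (\<phi> y) (\<beta>+pi/2) < e) at_top"
  proof eventually_elim
    case (elim y)
    define s where "s = \<phi> y - (\<beta> + pi/2)"
    have "\<bar>\<phi>0 y - \<beta>\<bar> < pi/2" using elim(1) by (simp add: dist_real_def)
    then have a1: "-(pi/2) < \<phi>0 y - \<beta>" "\<phi>0 y - \<beta> < pi/2" using abs_less_iff[of "\<phi>0 y - \<beta>" "pi/2"] by linarith+
    have a2: "0 \<le> \<phi> y - \<phi>0 y" "\<phi> y - \<phi>0 y \<le> pi" using bnd elim(3) by auto
    have "-pi < s" "s < pi" unfolding s_def using a1 a2 by linarith+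
    then have sp: "\<bar>s\<bar> < pi" by (simp add: abs_less_iff)
    have "\<bar>s\<bar> < e'"
    proof (rule ccontr)
      assume "\<not> \<bar>s\<bar> < e'"
      then have "cos \<bar>s\<bar> \<le> cos e'" using cos_monotone_0_pi_le[of e' "\<bar>s\<bar>"] e' sp by simp
      then show False using elim(2) unfolding s_def[symmetric] by simp
    qed
    then show ?case using e' by (simp add: s_def dist_real_def)
  qed
qed


lemma Pm_imag_direction_tendsto:
  "((\<lambda>y. Pm n (\<i> * of_real y) / of_real (norm (Pm n (\<i> * of_real y)))) \<longlongrightarrow> cis (real n * pi / 2)) at_top"
proof -
  define v where "v y = poly (reflect_poly (pade_poly n)) (1 / (\<i> * of_real y))" for y
  have "((\<lambda>y::real. 1 / (\<i> * complex_of_real y)) \<longlongrightarrow> 0) at_top"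
  proof -
    have "((\<lambda>y::real. - \<i> * complex_of_real (inverse y)) \<longlongrightarrow> - \<i> * complex_of_real 0) at_top"
      by (intro tendsto_intros tendsto_inverse_0_at_top filterlim_ident)
    moreover have "1 / (\<i> * complex_of_real y) = - \<i> * complex_of_real (inverse y)" for y
      by (cases "y = 0") (simp_all add: field_simps)
    ultimately show ?thesis by simp
  qed
  then have "(v \<longlongrightarrow> poly (reflect_poly (pade_poly n)) 0) at_top"
    unfolding v_def by (intro tendsto_intros)
  then have v: "(v \<longlongrightarrow> 1) at_top" by (simp add: lead_coeff_pade_poly)
  have "((\<lambda>y. \<i>^n * (v y / of_real (norm (v y)))) \<longlongrightarrow> \<i>^n * (1 / of_real (norm (1::complex)))) at_top"
    by (intro tendsto_intros v) simp
  moreover have "\<forall>\<^sub>F y in at_top. \<i>^n * (v y / of_real (norm (v y)))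
      = Pm n (\<i> * of_real y) / of_real (norm (Pm n (\<i> * of_real y)))"
  proof (rule eventually_mono[OF eventually_gt_at_top[of 0]])
    fix y :: real assume y: "y > 0"
    have P: "Pm n (\<i> * of_real y) = (\<i> * of_real y)^n * v y"
      unfolding v_def using y by (intro Pm_eq_reflect_poly) simp
    then have "v y \<noteq> 0" using Pm_imag_nonzero[of n y] by auto
    moreover have "norm (Pm n (\<i> * of_real y)) = y^n * norm (v y)"
      using P y by (simp add: norm_mult norm_power)
    moreover have "Pm n (\<i> * of_real y) = \<i>^n * (of_real (y^n) * v y)"
      using P by (simp add: power_mult_distrib)
    ultimately show "\<i>^n * (v y / of_real (norm (v y))) = Pm n (\<i> * of_real y) / of_real (norm (Pm n (\<i> * of_real y)))"
      using y by simp
  qed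
  moreover have "\<i>^n = cis (real n * pi / 2)"
    using Complex.DeMoivre[of "pi / 2" n] by (simp only: cis_pi_half times_divide_eq_right)
  ultimately show ?thesis by (simp add: Lim_transform_eventually)
qed

lemma Pm_imag_phase_exists: "\<exists>\<phi>. is_phase (\<lambda>y. Pm n (\<i> * of_real y)) \<phi>"
  by (rule phase_exists[of _ "pade_coeff n 0"])
     (auto simp: Pm_imag_nonzero Pm_at_0 pade_coeff_pos
           intro!: continuous_on_compose2[OF continuous_on_Pm] continuous_intros)

text \<open>The winding of \<open>P\<^sub>n\<close> along the imaginary axis is determined inductively:
  by \<open>Im_Pm_Suc_mult_cnj\<close> the phase of \<open>P\<^sub>n\<^sub>+\<^sub>1\<close> stays within \<open>[0, \<pi>]\<close> ahead of the
  phase of \<open>P\<^sub>n\<close>, which removes the ambiguity modulo \<open>2\<pi>\<close> in the limit.\<close>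
lemma Pm_imag_phase_tendsto:
  "is_phase (\<lambda>y. Pm n (\<i> * of_real y)) \<phi> \<Longrightarrow> (\<phi> \<longlongrightarrow> real n * pi / 2) at_top"
proof (induction n arbitrary: \<phi>)
  case 0
  have "\<forall>\<^sub>F y in at_top. \<phi> y = 0"
    using eventually_ge_at_top[of "0::real"] by (rule eventually_mono) (use phase_of_one 0 in simp)
  then show ?case by (simp add: tendsto_eventually)
next
  case (Suc n)
  obtain \<psi> where \<psi>: "is_phase (\<lambda>y. Pm n (\<i> * of_real y)) \<psi>"
    using Pm_imag_phase_exists by blast
  have eq: "real (Suc n) * pi / 2 = real n * pi / 2 + pi / 2"
    by (simp add: field_simps)
  have "Im (Pm (Suc n) (\<i> * of_real y) * cnj (Pm n (\<i> * of_real y))) > 0" if "y > 0" for y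
    using Im_Pm_Suc_mult_cnj[of n y] that by simp
  then have bounds: "\<forall>y\<ge>0. 0 \<le> \<phi> y - \<psi> y \<and> \<phi> y - \<psi> y \<le> pi"
    using phase_difference_bounds[OF Suc.prems \<psi>] by blast
  have "((\<lambda>y. cos (\<phi> y - real (Suc n) * pi / 2)) \<longlongrightarrow> 1) at_top"
    by (rule cos_phase_tendsto[OF Suc.prems Pm_imag_nonzero Pm_imag_direction_tendsto])
  then show ?case
    unfolding eq by (rule phase_tendsto_step[OF Suc.IH[OF \<psi>] bounds])
qed

definition pade_diff :: "nat \<Rightarrow> complex poly" where
  "pade_diff m = pade_poly m - pcompose (pade_poly m) [:0, -1:]"

lemma poly_pade_diff: "poly (pade_diff m) z = Pm m z - Pm m (-z)"
  by (simp add: pade_diff_def poly_pcompose poly_pade_poly)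

lemma coeff_pade_diff: "coeff (pade_diff m) j = of_real (pade_coeff m j) * (1 - (-1)^j)"
  by (simp add: pade_diff_def coeff_pcompose_linear coeff_pade_poly algebra_simps)

lemma degree_pade_diff:
  assumes "m \<le> 2*L + 2"
  shows "degree (pade_diff m) \<le> 2*L + 1"
proof (rule degree_le, intro allI impI)
  fix j assume j: "2*L + 1 < j"
  show "coeff (pade_diff m) j = 0"
  proof (cases "j \<le> m")
    case True
    then have "even j" using j assms by presburger
    then show ?thesis by (simp add: coeff_pade_diff)
  qed (simp add: coeff_pade_diff pade_coeff_above)
qed

lemma pade_diff_nonzero:
  assumes "m \<ge> 1"
  shows "pade_diff m \<noteq> 0"
proof
  assume "pade_diff m = 0"
  then have "coeff (pade_diff m) 1 = 0" by simp
  then show False using pade_coeff_pos[OF assms] by (simp add: coeff_pade_diff)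
qed

lemma deriv_Rm_at_fixed_point_pderiv:
  assumes "Pm m a = Pm m (-a)"
  shows "deriv (Rm m) a = poly (pderiv (pade_diff m)) a / Pm m a"
proof -
  have nz: "Pm m (-a) \<noteq> 0" using assms Pm_no_common_zero[of m a] by auto
  have "deriv (Rm m) a = (dPm m a * Pm m (-a) + Pm m a * dPm m (-a)) / Pm m (-a)^2"
    by (rule DERIV_imp_deriv[OF Rm_has_field_derivative_quotient[OF nz]])
  also have "\<dots> = (dPm m a + dPm m (-a)) * Pm m (-a) / (Pm m (-a) * Pm m (-a))"
    by (simp add: assms power2_eq_square algebra_simps)
  also have "\<dots> = poly (pderiv (pade_diff m)) a / Pm m a"
    using nz assms
    by (simp add: pade_diff_def pderiv_pcompose poly_pcompose dPm_def pderiv_diff pderiv_pCons)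
  finally show ?thesis .
qed

lemma card_roots_less_degree_if_multiple:
  fixes p :: "complex poly"
  assumes p: "p \<noteq> 0" and r: "poly p a = 0" and d: "poly (pderiv p) a = 0"
  shows "card {x. poly p x = 0} < degree p"
proof -
  have dp: "pderiv p \<noteq> 0"
  proof
    assume "pderiv p = 0"
    then have "degree p = 0" by (simp add: pderiv_eq_0_iff)
    then obtain c where "p = [:c:]" by (metis degree_eq_zeroE)
    then show False using p r by simp
  qed
  have o1: "order a p = Suc (order a (pderiv p))" by (rule order_pderiv[OF p r])
  have "order a (pderiv p) \<noteq> 0" using dp d by (simp add: order_root)
  then have o2: "order a p \<ge> 2" using o1 by simp
  have "[:-a, 1:]^2 dvd p" using order_1[of a p] o2 by (rule power_le_dvd)
  then obtain q where q: "p = [:-a, 1:]^2 * q" by (elim dvdE)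
  have qnz: "q \<noteq> 0" using p q by auto
  have dq: "degree p = 2 + degree q"
    using q qnz by (simp add: degree_mult_eq degree_power_eq)
  have sub: "{x. poly p x = 0} \<subseteq> insert a {x. poly q x = 0}"
    using q by auto
  have "card {x. poly p x = 0} \<le> card (insert a {x. poly q x = 0})"
    by (rule card_mono) (simp add: poly_roots_finite[OF qnz], rule sub)
  also have "\<dots> \<le> Suc (card {x. poly q x = 0})" by (simp add: card_insert_if poly_roots_finite[OF qnz])
  also have "\<dots> \<le> Suc (degree q)" using card_poly_roots_bound[OF qnz] by simp
  finally show ?thesis using dq by simp
qed

definition labelled_root :: "(nat \<Rightarrow> real) \<Rightarrow> nat \<Rightarrow> complex" where
  "labelled_root r j =
     (if j = 1 then 0 else if even j then \<i> * of_real (r (j div 2)) else - \<i> * of_real (r (j div 2)))"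

lemma inj_on_labelled_root:
  assumes pos: "\<And>k. k \<in> {1..L} \<Longrightarrow> r k > 0" and inj: "inj_on r {1..L}"
  shows "inj_on (labelled_root r) {1..2*L+1}"
proof (rule inj_onI)
  fix i j assume i: "i \<in> {1..2*L+1}" and j: "j \<in> {1..2*L+1}" and eq: "labelled_root r i = labelled_root r j"
  have half: "k div 2 \<in> {1..L}" if "k \<in> {1..2*L+1}" "k \<noteq> 1" for k
    using that by auto
  have Im_eq: "Im (labelled_root r i) = Im (labelled_root r j)" using eq by simp
  show "i = j"
  proof (cases "i = 1 \<or> j = 1")
    case True
    then show ?thesis
      using Im_eq pos[OF half[OF i]] pos[OF half[OF j]] by (auto simp: labelled_root_def split: if_splits)
  next
    case False
    then have "even i = even j" "r (i div 2) = r (j div 2)"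
      using Im_eq pos[OF half[OF i]] pos[OF half[OF j]] by (auto simp: labelled_root_def split: if_splits)
    then have "even i = even j" "i div 2 = j div 2"
      using inj half i j False by (auto dest: inj_onD)
    then show ?thesis by presburger
  qed
qed

lemma Pm_imag_at_phase_multiple:
  assumes "is_phase (\<lambda>y. Pm m (\<i> * of_real y)) \<phi>" "y \<ge> 0" "\<phi> y = real k * pi"
  shows "Pm m (\<i> * of_real y) = of_real (norm (Pm m (\<i> * of_real y))) * (-1)^k"
    and "Pm m (- (\<i> * of_real y)) = Pm m (\<i> * of_real y)"
proof -
  have "Pm m (\<i> * of_real y) = of_real (norm (Pm m (\<i> * of_real y))) * cis (real k * pi)"
    using is_phaseD(3)[OF assms(1,2), unfolded assms(3)] .
  also have "cis (real k * pi) = (-1)^k"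
    using Complex.DeMoivre[of pi k] by simp
  finally show real: "Pm m (\<i> * of_real y) = of_real (norm (Pm m (\<i> * of_real y))) * (-1)^k" .
  have "Pm m (- (\<i> * of_real y)) = cnj (Pm m (\<i> * of_real y))" by (simp add: cnj_Pm)
  also have "\<dots> = Pm m (\<i> * of_real y)"
  proof -
    have "cnj w = w" if "w = of_real c * (-1)^k" for w c by (simp add: that)
    then show ?thesis using real by blast
  qed
  finally show "Pm m (- (\<i> * of_real y)) = Pm m (\<i> * of_real y)" .
qed

lemma phase_crossings:
  fixes \<phi> :: "real \<Rightarrow> real"
  assumes cont: "continuous_on {0..} \<phi>" and \<phi>0: "\<phi> 0 = 0"
    and above: "\<forall>\<^sub>F y in at_top. real L * pi < \<phi> y"
  obtains r where "\<And>k. k \<in> {1..L} \<Longrightarrow> 0 < r k \<and> \<phi> (r k) = real k * pi" "inj_on r {1..L}"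
proof -
  obtain Y0 where "\<And>y. y \<ge> Y0 \<Longrightarrow> real L * pi < \<phi> y"
    using above by (auto simp: eventually_at_top_linorder)
  then obtain Y where Y: "Y \<ge> 0" "real L * pi < \<phi> Y"
    by (metis max.cobounded1 max.cobounded2)
  have "\<exists>y. 0 < y \<and> \<phi> y = real k * pi" if k: "k \<in> {1..L}" for k
  proof -
    have "real k * pi \<le> real L * pi" using k by (simp add: mult_right_mono)
    then have "real k * pi \<le> \<phi> Y" using Y(2) by linarith
    moreover have "continuous_on {0..Y} \<phi>" using cont by (rule continuous_on_subset) auto
    ultimately obtain y where "0 \<le> y" "\<phi> y = real k * pi"
      using IVT'[of \<phi> 0 "real k * pi" Y] Y(1) \<phi>0 by auto
    moreover have "y \<noteq> 0" using calculation \<phi>0 k by auto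
    ultimately show ?thesis by (intro exI[of _ y]) auto
  qed
  then obtain r where r: "\<And>k. k \<in> {1..L} \<Longrightarrow> 0 < r k \<and> \<phi> (r k) = real k * pi"
    by metis
  moreover have "inj_on r {1..L}"
  proof (rule inj_onI)
    fix i j assume "i \<in> {1..L}" "j \<in> {1..L}" "r i = r j"
    then have "real i * pi = real j * pi" using r by metis
    then show "i = j" by simp
  qed
  ultimately show ?thesis by (rule that)
qed

lemma pade_diff_roots:
  assumes L: "2*L < m" "m \<le> 2*L + 2" and \<phi>: "is_phase (\<lambda>y. Pm m (\<i> * of_real y)) \<phi>"
  obtains r where "\<And>k. k \<in> {1..L} \<Longrightarrow> 0 < r k \<and> \<phi> (r k) = real k * pi"
    "inj_on (labelled_root r) {1..2*L+1}"
    "{z. Pm m z = Pm m (-z)} = labelled_root r ` {1..2*L+1}"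
proof -
  have "real L * pi < real m * pi / 2" using L(1) by (simp add: field_simps)
  then have "\<forall>\<^sub>F y in at_top. real L * pi < \<phi> y"
    by (rule order_tendstoD(1)[OF Pm_imag_phase_tendsto[OF \<phi>]])
  then obtain r where r: "\<And>k. k \<in> {1..L} \<Longrightarrow> 0 < r k \<and> \<phi> (r k) = real k * pi"
    and "inj_on r {1..L}"
    using phase_crossings[OF is_phaseD(1,2)[OF \<phi>]] by blast
  then have inj: "inj_on (labelled_root r) {1..2*L+1}"
    using r by (intro inj_on_labelled_root) auto
  have roots_eq: "{z. Pm m z = Pm m (-z)} = {z. poly (pade_diff m) z = 0}"
    by (simp add: poly_pade_diff)
  have sub: "labelled_root r ` {1..2*L+1} \<subseteq> {z. Pm m z = Pm m (-z)}"
  proof clarify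
    fix j assume j: "j \<in> {1..2*L+1}"
    show "Pm m (labelled_root r j) = Pm m (- labelled_root r j)"
    proof (cases "j = 1")
      case False
      then have "j div 2 \<in> {1..L}" using j by auto
      then have "0 < r (j div 2)" "\<phi> (r (j div 2)) = real (j div 2) * pi" using r by blast+
      then have "Pm m (- (\<i> * of_real (r (j div 2)))) = Pm m (\<i> * of_real (r (j div 2)))"
        by (intro Pm_imag_at_phase_multiple(2)[OF \<phi>]) auto
      then show ?thesis by (auto simp: labelled_root_def)
    qed (simp add: labelled_root_def)
  qed
  have nz: "pade_diff m \<noteq> 0" using L(1) by (intro pade_diff_nonzero) simp
  have "card {z. Pm m z = Pm m (-z)} \<le> 2*L + 1"
    unfolding roots_eq using card_poly_roots_bound[OF nz] degree_pade_diff[OF L(2)] by linarith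
  moreover have "card (labelled_root r ` {1..2*L+1}) = 2*L + 1"
    using card_image[OF inj] by simp
  moreover have "finite {z. Pm m z = Pm m (-z)}"
    unfolding roots_eq by (rule poly_roots_finite[OF nz])
  ultimately have "labelled_root r ` {1..2*L+1} = {z. Pm m z = Pm m (-z)}"
    using sub by (intro card_seteq) simp_all
  then show ?thesis by (intro that[OF r inj]) auto
qed

lemma pade_diff_root_simple:
  assumes "m \<ge> 1" "Pm m a = Pm m (-a)"
  shows "poly (pderiv (pade_diff m)) a \<noteq> 0"
proof
  assume double: "poly (pderiv (pade_diff m)) a = 0"
  define L where "L = (m + 1) div 2 - 1"
  have L: "2*L < m" "m \<le> 2*L + 2" using assms(1) unfolding L_def by presburger+
  obtain \<phi> where \<phi>: "is_phase (\<lambda>y. Pm m (\<i> * of_real y)) \<phi>" using Pm_imag_phase_exists by blast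
  obtain r where "\<And>k. k \<in> {1..L} \<Longrightarrow> 0 < r k \<and> \<phi> (r k) = real k * pi"
    and inj: "inj_on (labelled_root r) {1..2*L+1}"
    and roots: "{z. Pm m z = Pm m (-z)} = labelled_root r ` {1..2*L+1}"
    using pade_diff_roots[OF L \<phi>] by blast
  have "{z. poly (pade_diff m) z = 0} = labelled_root r ` {1..2*L+1}"
    unfolding roots[symmetric] by (simp add: poly_pade_diff)
  then have "card {z. poly (pade_diff m) z = 0} = 2*L + 1"
    using card_image[OF inj] by simp
  moreover have "card {z. poly (pade_diff m) z = 0} < degree (pade_diff m)"
    using assms double by (intro card_roots_less_degree_if_multiple pade_diff_nonzero) (simp_all add: poly_pade_diff)
  ultimately show False using degree_pade_diff[OF L(2)] by simp
qed

lemma deriv_Rm_at_fixed_point_nonzero: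
  assumes "m \<ge> 1" "Pm m a = Pm m (-a)"
  shows "deriv (Rm m) a \<noteq> 0"
  using pade_diff_root_simple[OF assms] deriv_Rm_at_fixed_point_pderiv[OF assms(2)]
    Pm_no_common_zero[of m a] assms(2) by auto

lemma phase_right_of_unique_crossing:
  fixes \<phi> :: "real \<Rightarrow> real"
  assumes cont: "continuous_on {0..} \<phi>" and y0: "0 \<le> y0" "\<phi> y0 = \<theta>"
    and unique: "\<And>y. y > y0 \<Longrightarrow> \<phi> y \<noteq> \<theta>" and above: "\<forall>\<^sub>F y in at_top. \<theta> < \<phi> y"
    and \<epsilon>: "\<epsilon> > 0"
  shows "\<forall>\<^sub>F y in at_right y0. \<theta> < \<phi> y \<and> \<phi> y < \<theta> + \<epsilon>"
proof -
  obtain N where N: "\<And>y. y \<ge> N \<Longrightarrow> \<theta> < \<phi> y"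
    using above by (auto simp: eventually_at_top_linorder)
  have right: "\<theta> < \<phi> y" if y: "y > y0" for y
  proof (rule ccontr)
    assume "\<not> \<theta> < \<phi> y"
    moreover define Y where "Y = max y N"
    moreover have "\<theta> < \<phi> Y" "y \<le> Y" unfolding Y_def by (auto intro: N)
    moreover have "continuous_on {y..Y} \<phi>"
      using cont by (rule continuous_on_subset) (use y y0 in auto)
    ultimately obtain s where "y \<le> s" "\<phi> s = \<theta>"
      using IVT'[of \<phi> y \<theta> Y] by auto
    then show False using unique y by auto
  qed
  have "\<forall>\<^sub>F y in at_right y0. dist (\<phi> y) (\<phi> y0) < \<epsilon>"
  proof -
    have "(\<phi> \<longlongrightarrow> \<phi> y0) (at y0 within {0..})"
      using cont y0(1) by (simp add: continuous_on_def)
    then have "(\<phi> \<longlongrightarrow> \<phi> y0) (at_right y0)"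
      by (rule tendsto_within_subset) (use y0(1) in auto)
    then show ?thesis using \<epsilon> by (rule tendstoD)
  qed
  then show ?thesis
    using eventually_at_right_less[of y0]
  proof eventually_elim
    case (elim y)
    then show ?case using right[of y] y0(2) by (auto simp: dist_real_def)
  qed
qed

lemma deriv_nonneg_if_Im_pos_upwards:
  assumes f: "(f has_field_derivative of_real c) (at a)" and "Im (f a) = 0"
    and pos: "\<forall>\<^sub>F h in at_right 0. 0 < Im (f (a + \<i> * of_real h))"
  shows "c \<ge> 0"
proof -
  have quot: "((\<lambda>z. (f z - f a) / (z - a)) \<longlongrightarrow> of_real c) (at a)"
    using f by (simp add: has_field_derivative_iff)
  have "filterlim (\<lambda>h::real. a + \<i> * of_real h) (at a) (at_right 0)"
  proof (rule filterlim_atI)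
    show "((\<lambda>h::real. a + \<i> * of_real h) \<longlongrightarrow> a) (at_right 0)"
      by (auto intro!: tendsto_eq_intros)
    show "\<forall>\<^sub>F h in at_right 0. a + \<i> * of_real h \<noteq> a"
      by (rule eventually_mono[OF eventually_at_right_less]) simp
  qed
  from tendsto_Re[OF filterlim_compose[OF quot this]]
  have "((\<lambda>h. Re ((f (a + \<i> * of_real h) - f a) / (\<i> * of_real h))) \<longlongrightarrow> c) (at_right 0)"
    by simp
  moreover have "Re (w / (\<i> * of_real h)) = Im w / h" for w h
    by (cases "h = 0") (simp_all add: Re_divide power2_eq_square)
  ultimately have "((\<lambda>h. Im (f (a + \<i> * of_real h)) / h) \<longlongrightarrow> c) (at_right 0)"
    using assms(2) by simp
  moreover have "\<forall>\<^sub>F h in at_right 0. 0 \<le> Im (f (a + \<i> * of_real h)) / h"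
    using pos eventually_at_right_less[of "0::real"] by eventually_elim simp
  ultimately show ?thesis by (rule tendsto_lowerbound) simp
qed

lemma Rm_imag_axis:
  assumes "is_phase (\<lambda>y. Pm m (\<i> * of_real y)) \<phi>" "y \<ge> 0"
  shows "Rm m (\<i> * of_real y) = cis (2 * \<phi> y)"
proof -
  have polar: "Pm m (\<i> * of_real y) = of_real (norm (Pm m (\<i> * of_real y))) * cis (\<phi> y)"
    using is_phaseD(3)[OF assms] .
  have "Rm m (\<i> * of_real y) = Pm m (\<i> * of_real y) / cnj (Pm m (\<i> * of_real y))"
    by (simp add: Rm_def cnj_Pm)
  also have "\<dots> = cis (\<phi> y) / cis (- \<phi> y)"
    using Pm_imag_nonzero[of m y] by (subst (1 2) polar) (simp add: cis_cnj)
  also have "\<dots> = cis (2 * \<phi> y)" by (simp add: cis_divide)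
  finally show ?thesis .
qed

lemma Im_Rm_pos_above_imag_root:
  assumes m: "m \<ge> 1" and \<phi>: "is_phase (\<lambda>y. Pm m (\<i> * of_real y)) \<phi>"
    and y: "0 < y" "\<phi> y = real k * pi" and k: "2*k < m"
    and unique: "\<And>s. 0 < s \<Longrightarrow> \<phi> s = real k * pi \<Longrightarrow> s = y"
  shows "\<forall>\<^sub>F h in at_right 0. 0 < Im (Rm m (\<i> * of_real y + \<i> * of_real h))"
proof -
  have "real k * pi < real m * pi / 2" using k by (simp add: field_simps)
  then have above: "\<forall>\<^sub>F s in at_top. real k * pi < \<phi> s"
    by (rule order_tendstoD(1)[OF Pm_imag_phase_tendsto[OF \<phi>]])
  have "\<forall>\<^sub>F s in at_right y. real k * pi < \<phi> s \<and> \<phi> s < real k * pi + pi / 2"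
  proof (rule phase_right_of_unique_crossing[OF is_phaseD(1)[OF \<phi>] _ y(2) _ above])
    show "\<phi> s \<noteq> real k * pi" if "s > y" for s
    proof
      assume "\<phi> s = real k * pi"
      with that y(1) have "s = y" by (intro unique) auto
      with that show False by simp
    qed
  qed (use y(1) in auto)
  then have "\<forall>\<^sub>F h in at_right 0. real k * pi < \<phi> (h + y) \<and> \<phi> (h + y) < real k * pi + pi / 2"
    by (simp add: eventually_at_right_to_0[of _ y])
  then show ?thesis
    using eventually_at_right_less[of "0::real"]
  proof eventually_elim
    case (elim h)
    have "\<i> * of_real y + \<i> * of_real h = \<i> * of_real (h + y)" by (simp add: algebra_simps)
    then have "Im (Rm m (\<i> * of_real y + \<i> * of_real h)) = sin (2 * \<phi> (h + y))"
      using Rm_imag_axis[OF \<phi>, of "h + y"] elim y by simp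
    also have "\<dots> = sin (2 * \<phi> (h + y) - 2 * real k * pi)"
      by (simp add: sin_diff)
    finally show ?case using elim by (auto intro!: sin_gt_zero)
  qed
qed

lemma deriv_Rm_at_imag_root:
  assumes m: "m \<ge> 1" and \<phi>: "is_phase (\<lambda>y. Pm m (\<i> * of_real y)) \<phi>"
    and y: "0 < y" "\<phi> y = real k * pi" and k: "2*k < m"
    and unique: "\<And>s. 0 < s \<Longrightarrow> \<phi> s = real k * pi \<Longrightarrow> s = y"
  obtains c where "0 < c" "c < 1"
    "deriv (Rm m) (\<i> * of_real y) = of_real c" "deriv (Rm m) (- (\<i> * of_real y)) = of_real c"
proof -
  define a where "a = \<i> * complex_of_real y"
  define p where "p = norm (Pm m a)"
  have Pa: "Pm m a = of_real p * (-1)^k" "Pm m (-a) = Pm m a"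
    using Pm_imag_at_phase_multiple[OF \<phi> _ y(2)] y(1) by (simp_all add: a_def p_def)
  have p: "p > 0" using Pm_imag_nonzero by (simp add: p_def a_def)
  define c where "c = 1 - y^(2*m) / p^2"
  have "a^(2*m) = (-1)^m * of_real (y^(2*m))"
    unfolding a_def by (simp add: power_mult_distrib power_mult) (metis power_minus)
  then have "1 + (-1)^(m+1) * a^(2*m) / Pm m a ^ 2 = of_real c"
    by (simp add: Pa(1) c_def power_mult_distrib flip: power_mult power_add)
  moreover have "(- a)^(2*m) = a^(2*m)" by (simp add: power_mult)
  ultimately have deriv_a: "deriv (Rm m) a = of_real c" and deriv_neg: "deriv (Rm m) (-a) = of_real c"
    using deriv_Rm_at_fixed_point[OF m Pa(2)[symmetric]] deriv_Rm_at_fixed_point[OF m, of "-a"] Pa(2)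
    by simp_all
  have "c < 1" using y p by (simp add: c_def)
  have "c \<noteq> 0" using deriv_Rm_at_fixed_point_nonzero[OF m Pa(2)[symmetric]] deriv_a by simp
  have "c \<ge> 0"
  proof (rule deriv_nonneg_if_Im_pos_upwards)
    have "Pm m (-a) \<noteq> 0" using Pa p by simp
    then obtain D where D: "(Rm m has_field_derivative D) (at a)"
      using Rm_has_field_derivative[OF m] by blast
    with deriv_a show "(Rm m has_field_derivative of_real c) (at a)"
      using DERIV_imp_deriv[OF D] by simp
    show "Im (Rm m a) = 0" using Pa p by (simp add: Rm_def)
    show "\<forall>\<^sub>F h in at_right 0. 0 < Im (Rm m (a + \<i> * of_real h))"
      unfolding a_def by (rule Im_Rm_pos_above_imag_root[OF m \<phi> y k unique])
  qed
  then show ?thesis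
    using that[of c] \<open>c < 1\<close> \<open>c \<noteq> 0\<close> deriv_a deriv_neg by (simp add: a_def)
qed

lemma tendsto_zero_if_bigo:
  fixes f g :: "'a \<Rightarrow> 'b::real_normed_field"
  assumes "f \<in> O[F](g)" "(g \<longlongrightarrow> 0) F"
  shows "(f \<longlongrightarrow> 0) F"
proof -
  obtain c where "\<forall>\<^sub>F x in F. norm (f x) \<le> c * norm (g x)"
    using assms(1) by (elim landau_o.bigE)
  moreover have "((\<lambda>x. c * norm (g x)) \<longlongrightarrow> 0) F"
    using tendsto_mult_right_zero[OF tendsto_norm_zero[OF assms(2)]] .
  ultimately show ?thesis by (rule Lim_null_comparison)
qed

lemma holomorphic_taylor1_bigo:
  fixes f :: "complex \<Rightarrow> complex"
  assumes hol: "f holomorphic_on ball 0 r" and r: "r > 0"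
  shows "(\<lambda>t. f t - f 0 - deriv f 0 * t) \<in> O[at 0](\<lambda>t. t^2)"
proof -
  have i0: "0 \<in> interior (ball (0::complex) r)" using r by simp
  define g where "g = (\<lambda>z. if z = 0 then deriv f 0 else (f z - f 0) / (z - 0))"
  have "g holomorphic_on ball 0 r" unfolding g_def by (rule pole_lemma[OF hol i0])
  define h where "h = (\<lambda>z. if z = 0 then deriv g 0 else (g z - g 0) / (z - 0))"
  have "h holomorphic_on ball 0 r" unfolding h_def by (rule pole_lemma[OF \<open>g holomorphic_on _\<close> i0])
  then have "isCont h 0"
    using r by (metis centre_in_ball continuous_on_eq_continuous_at holomorphic_on_imp_continuous_on open_ball)
  then have "h \<in> O[at 0](\<lambda>_. 1)"
    by (intro bigoI_tendsto[where c = "h 0"]) (simp_all add: isCont_def)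
  then have "(\<lambda>t. t^2 * h t) \<in> O[at 0](\<lambda>t. t^2 * 1)"
    by (rule landau_o.big.mult_left)
  moreover have "\<forall>\<^sub>F t in at 0. t^2 * h t = f t - f 0 - deriv f 0 * t"
    by (rule eventually_mono[OF eventually_neq_at_within[of 0]])
       (simp add: g_def h_def field_simps power2_eq_square)
  ultimately show ?thesis by (simp add: landau_o.big.in_cong)
qed

lemma local_branch:
  fixes F :: "complex \<Rightarrow> complex"
  assumes S: "open S" "a \<in> S" and hol: "F holomorphic_on S" and Fa: "F a = 1"
    and d: "deriv F a \<noteq> 0" and \<epsilon>: "\<epsilon> > 0"
  obtains \<rho> \<zeta> where "0 < \<rho>" "\<rho> \<le> \<epsilon>" "ball a \<rho> \<subseteq> S"
    "\<forall>\<^sub>F t in nhds 0. \<zeta> t \<in> ball a \<rho> \<and> F (\<zeta> t) = exp t"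
    "\<And>t z. z \<in> ball a \<rho> \<Longrightarrow> F z = exp t \<Longrightarrow> z = \<zeta> t"
    "(\<lambda>t. \<zeta> t - (a + t / deriv F a)) \<in> O[at 0](\<lambda>t. t^2)"
proof -
  have S': "open (S \<inter> ball a \<epsilon>)" "a \<in> S \<inter> ball a \<epsilon>" using S \<epsilon> by auto
  obtain \<rho> where \<rho>: "\<rho> > 0" "ball a \<rho> \<subseteq> S \<inter> ball a \<epsilon>" "open (F ` ball a \<rho>)" "inj_on F (ball a \<rho>)"
    using has_complex_derivative_locally_invertible[OF holomorphic_on_subset[OF hol] S'(2,1) d] by blast
  have holb: "F holomorphic_on ball a \<rho>" using hol by (rule holomorphic_on_subset) (use \<rho>(2) in auto)
  obtain G where G: "G holomorphic_on (F ` ball a \<rho>)"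
      "\<And>z. z \<in> ball a \<rho> \<Longrightarrow> deriv F z * deriv G (F z) = 1"
      "\<And>z. z \<in> ball a \<rho> \<Longrightarrow> G (F z) = z"
    using holomorphic_has_inverse[OF holb open_ball \<rho>(4)] by blast
  define V where "V = F ` ball a \<rho>"
  have aV: "a \<in> ball a \<rho>" and oneV: "1 \<in> V" using \<rho>(1) Fa unfolding V_def by force+
  define \<zeta> where "\<zeta> t = G (exp t)" for t
  have openW: "open {t. exp t \<in> V}"
    using open_vimage[OF \<rho>(3)[folded V_def] continuous_on_exp[OF continuous_on_id]] by (simp add: vimage_def)
  then obtain r where r: "r > 0" "ball 0 r \<subseteq> {t. exp t \<in> V}"
    using oneV by (metis mem_Collect_eq exp_zero openE)
  have "\<forall>\<^sub>F t in nhds 0. exp t \<in> V"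
    using openW oneV by (intro eventually_nhds_in_open[of "{t. exp t \<in> V}", simplified]) auto
  then have sol: "\<forall>\<^sub>F t in nhds 0. \<zeta> t \<in> ball a \<rho> \<and> F (\<zeta> t) = exp t"
    by (rule eventually_mono) (use G(3) in \<open>force simp: V_def \<zeta>_def\<close>)
  have unique: "z = \<zeta> t" if "z \<in> ball a \<rho>" "F z = exp t" for t z
    using G(3)[OF that(1)] that(2) by (simp add: \<zeta>_def)
  have "\<zeta> holomorphic_on ball 0 r"
    unfolding \<zeta>_def using r
    by (intro holomorphic_on_compose_gen[OF holomorphic_on_exp G(1), unfolded o_def]) (auto simp: V_def)
  moreover have "\<zeta> 0 = a" using G(3)[OF aV] Fa by (simp add: \<zeta>_def)
  moreover have "deriv \<zeta> 0 = 1 / deriv F a"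
  proof -
    have "(G has_field_derivative deriv G 1) (at 1)"
      using holomorphic_derivI[OF G(1) \<rho>(3) oneV[unfolded V_def]] .
    then have "(\<zeta> has_field_derivative deriv G 1) (at 0)"
      unfolding \<zeta>_def using DERIV_chain2[OF _ DERIV_exp[of 0]] by simp
    moreover have "deriv G 1 = 1 / deriv F a" using G(2)[OF aV] Fa d by (simp add: field_simps)
    ultimately show ?thesis by (simp add: DERIV_imp_deriv)
  qed
  ultimately have "(\<lambda>t. \<zeta> t - (a + t / deriv F a)) \<in> O[at 0](\<lambda>t. t^2)"
    using holomorphic_taylor1_bigo[of \<zeta> r] r by (simp add: algebra_simps)
  moreover have "\<rho> \<le> \<epsilon>" using \<rho>(1,2) ball_subset_ball_iff[of a \<rho> a \<epsilon>] by auto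
  ultimately show ?thesis using that \<rho> sol unique by blast
qed

lemma inverse_bigo_of_linear:
  fixes f :: "complex \<Rightarrow> complex"
  assumes f: "(\<lambda>t. f t - c * t) \<in> O[at 0](\<lambda>t. t^2)" and c: "c \<noteq> 0"
  shows "(\<lambda>t. 1 / f t - 1 / (c * t)) \<in> O[at 0](\<lambda>_. 1)"
proof -
  obtain C where C: "C > 0" "\<forall>\<^sub>F t in at 0. norm (f t - c * t) \<le> C * norm (t^2)"
    using f by (elim landau_o.bigE)
  have "\<forall>\<^sub>F t in at 0. t \<in> ball 0 (norm c / (2 * C))"
    using c C(1) by (intro eventually_at_in_open') auto
  then have "\<forall>\<^sub>F t in at 0. norm (1 / f t - 1 / (c * t)) \<le> (2 * C / norm c ^ 2) * norm (1::complex)"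
    using C(2) eventually_neq_at_within[of 0]
  proof eventually_elim
    case (elim t)
    have "C * norm t \<le> norm c / 2"
      using elim(1) C(1) by (simp add: pos_less_divide_eq mult_ac)
    then have "C * norm t * norm t \<le> norm c / 2 * norm t"
      by (rule mult_right_mono) simp
    moreover have quad: "norm (f t - c * t) \<le> C * norm t * norm t"
      using elim(2) by (simp add: norm_power power2_eq_square norm_mult mult.assoc)
    ultimately have small: "norm (f t - c * t) \<le> norm c * norm t / 2" by simp
    have "norm (c * t) - norm (f t) \<le> norm (f t - c * t)"
      using norm_triangle_ineq2[of "c * t" "f t"] by (simp add: norm_minus_commute)
    then have big: "norm c * norm t / 2 \<le> norm (f t)"
      using small by (simp add: norm_mult)
    have pos: "0 < norm c * norm t" using c elim(3) by simp
    then have "f t \<noteq> 0" using big by auto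
    then have "1 / f t - 1 / (c * t) = (c * t - f t) / (c * t * f t)"
      using c elim(3) by (simp add: divide_simps)
    then have "norm (1 / f t - 1 / (c * t)) = norm (f t - c * t) / (norm c * norm t * norm (f t))"
      by (simp add: norm_divide norm_mult norm_minus_commute)
    also have "\<dots> \<le> (C * norm t * norm t) / (norm c * norm t * (norm c * norm t / 2))"
    proof (rule frac_le)
      show "norm c * norm t * (norm c * norm t / 2) \<le> norm c * norm t * norm (f t)"
        using big pos by (intro mult_left_mono) simp_all
    qed (use quad pos C(1) in simp_all)
    also have "\<dots> = 2 * C / norm c ^ 2"
      using c elim(3) by (simp add: divide_simps power2_eq_square)
    finally show ?case by simp
  qed
  then show ?thesis by (rule bigoI)
qed

lemma id_bigo_exp_minus_one: "(\<lambda>w::complex. w) \<in> O[nhds 0](\<lambda>w. exp w - 1)"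
  and eventually_exp_ne_one: "\<forall>\<^sub>F w in at (0::complex). exp w \<noteq> 1"
proof -
  have "((\<lambda>w::complex. (exp w - 1) / w) \<longlongrightarrow> 1) (at 0)"
    using DERIV_exp[of 0] by (simp add: has_field_derivative_iff)
  then show ne: "\<forall>\<^sub>F w in at (0::complex). exp w \<noteq> 1"
    by (rule eventually_mono[OF tendsto_imp_eventually_ne[of _ _ _ 0]]) auto
  have "((\<lambda>w::complex. w / (exp w - 1)) \<longlongrightarrow> 1) (at 0)"
    using tendsto_inverse[OF \<open>((\<lambda>w. (exp w - 1) / w) \<longlongrightarrow> 1) (at 0)\<close>] by simp
  then have "(\<lambda>w::complex. w) \<in> O[at 0](\<lambda>w. exp w - 1)"
    by (rule bigoI_tendsto) (use ne in \<open>auto elim: eventually_mono\<close>)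
  then obtain c where "\<forall>\<^sub>F w::complex in at 0. norm w \<le> c * norm (exp w - 1)"
    by (elim landau_o.bigE)
  then have "\<forall>\<^sub>F w::complex in nhds 0. norm w \<le> c * norm (exp w - 1)"
    by (simp add: eventually_nhds_conv_at)
  then show "(\<lambda>w::complex. w) \<in> O[nhds 0](\<lambda>w. exp w - 1)" by (rule bigoI)
qed

text \<open>The branch through the origin agrees with \<open>t\<close> to order \<open>2m\<close>, because
  \<open>R\<^sub>m(z) e\<^sup>-\<^sup>z - 1 = O(z\<^sup>2\<^sup>m\<^sup>+\<^sup>1)\<close>.\<close>
lemma branch_at_zero_bigo:
  assumes m: "m \<ge> 1" and \<zeta>: "(\<lambda>t. \<zeta> t - t) \<in> O[at 0](\<lambda>t. t^2)"
    and sol: "\<forall>\<^sub>F t in at 0. Rm m (\<zeta> t) = exp t"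
  shows "(\<lambda>t. \<zeta> t - t) \<in> O[at 0](\<lambda>t. t^(2*m+1))"
proof -
  have "((\<lambda>t::complex. t^2) \<longlongrightarrow> 0^2) (at 0)" by (intro tendsto_intros)
  then have diff: "((\<lambda>t. \<zeta> t - t) \<longlongrightarrow> 0) (at 0)"
    by (intro tendsto_zero_if_bigo[OF \<zeta>]) simp
  have lim: "filterlim \<zeta> (nhds 0) (at 0)"
    using tendsto_add[OF diff tendsto_ident_at] by simp
  have lim': "filterlim (\<lambda>t. t - \<zeta> t) (nhds 0) (at 0)"
    using tendsto_minus[OF diff] by simp
  have "\<forall>\<^sub>F t in at (0::complex). t \<in> ball 0 1" by (intro eventually_at_in_open') auto
  then have "(\<lambda>t::complex. t^2) \<in> O[at 0](\<lambda>t. t)"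
    by (intro bigoI[where c = 1]) (auto elim!: eventually_mono simp: norm_power power2_eq_square norm_mult
        intro: mult_left_le_one_le)
  then have "(\<lambda>t. (\<zeta> t - t) + t) \<in> O[at 0](\<lambda>t. t)"
    by (intro sum_in_bigo(1) landau_o.big_trans[OF \<zeta>] landau_o.big_refl)
  then have "(\<lambda>t. \<zeta> t) \<in> O[at 0](\<lambda>t. t)" by simp
  have A: "(\<lambda>t. t - \<zeta> t) \<in> O[at 0](\<lambda>t. exp (t - \<zeta> t) - 1)"
    using landau_o.big.compose[OF id_bigo_exp_minus_one lim'] .
  have "\<forall>\<^sub>F t in at 0. exp (t - \<zeta> t) - 1 = Rm m (\<zeta> t) * exp (- \<zeta> t) - 1"
    using sol by eventually_elim (simp add: exp_diff exp_minus divide_inverse)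
  then have B: "(\<lambda>t. exp (t - \<zeta> t) - 1) \<in> O[at 0](\<lambda>t. Rm m (\<zeta> t) * exp (- \<zeta> t) - 1)"
    by (rule landau_o.big.in_cong[THEN iffD2, OF _ landau_o.big_refl])
  have C: "(\<lambda>t. Rm m (\<zeta> t) * exp (- \<zeta> t) - 1) \<in> O[at 0](\<lambda>t. \<zeta> t ^ (2*m+1))"
    using landau_o.big.compose[OF Rm_mult_exp_bigo[OF m] lim] .
  have D: "(\<lambda>t. \<zeta> t ^ (2*m+1)) \<in> O[at 0](\<lambda>t. t ^ (2*m+1))"
    by (rule landau_o.big_power[OF \<open>(\<lambda>t. \<zeta> t) \<in> O[at 0](\<lambda>t. t)\<close>])
  have "(\<lambda>t. t - \<zeta> t) \<in> O[at 0](\<lambda>t. t ^ (2*m+1))"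
    using landau_o.big_trans[OF A landau_o.big_trans[OF B landau_o.big_trans[OF C D]]] .
  then show ?thesis
    using landau_o.big.uminus_in_iff[of "\<lambda>t. t - \<zeta> t"] by simp
qed

text \<open>Near infinity \<open>R\<^sub>m(z) = R\<^sup>\<infinity>\<^sub>m(1/z)\<close>, where \<open>R\<^sup>\<infinity>\<^sub>m\<close> is built from the reversed
  polynomial and is holomorphic at the origin with \<open>R\<^sup>\<infinity>\<^sub>m(0) = (-1)\<^sup>m\<close>.\<close>
definition Rm_reflected :: "nat \<Rightarrow> complex \<Rightarrow> complex" where
  "Rm_reflected m x =
     (-1)^m * poly (reflect_poly (pade_poly m)) x / poly (reflect_poly (pade_poly m)) (-x)"

lemma Rm_eq_reflected:
  assumes "z \<noteq> 0"
  shows "Rm m z = Rm_reflected m (1/z)"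
proof -
  define A B where "A = poly (reflect_poly (pade_poly m)) (1/z)"
    and "B = poly (reflect_poly (pade_poly m)) (- (1/z))"
  have "Pm m z = z^m * A" unfolding A_def by (rule Pm_eq_reflect_poly[OF assms])
  moreover have "Pm m (-z) = (-z)^m * B"
    unfolding B_def using Pm_eq_reflect_poly[of "-z" m] assms by simp
  ultimately have "Rm m z = z^m * A / ((-z)^m * B)" by (simp add: Rm_def)
  also have "\<dots> = z^m * A / (z^m * ((-1)^m * B))"
    by (subst power_minus) (simp add: mult_ac)
  also have "\<dots> = A / ((-1)^m * B)"
    using assms by simp
  also have "\<dots> = (-1)^m * A / B"
    by (cases "even m") simp_all
  finally show ?thesis by (simp add: Rm_reflected_def A_def B_def)
qed

lemma Pm_neg_nonzero_iff_reflected: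
  "z \<noteq> 0 \<Longrightarrow> Pm m (-z) \<noteq> 0 \<longleftrightarrow> poly (reflect_poly (pade_poly m)) (- (1/z)) \<noteq> 0"
  using Pm_eq_reflect_poly[of "-z" m] by simp

lemma open_reflected_nonzero: "open {x. poly (reflect_poly (pade_poly m)) (-x) \<noteq> 0}"
  by (intro open_Collect_neq continuous_intros)

lemma Rm_reflected_has_field_derivative:
  fixes m defines "q \<equiv> reflect_poly (pade_poly m)"
  assumes "poly q (-x) \<noteq> 0"
  shows "(Rm_reflected m has_field_derivative
           (-1)^m * ((poly (pderiv q) x * poly q (-x) + poly q x * poly (pderiv q) (-x)) / poly q (-x)^2))
         (at x within A)"
proof -
  have "((\<lambda>x. poly q (-x)) has_field_derivative poly (pderiv q) (-x) * (-1)) (at x within A)"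
    by (rule DERIV_chain2[OF poly_DERIV]) (auto intro!: derivative_eq_intros)
  from DERIV_cmult[OF DERIV_divide[OF has_field_derivative_at_within[OF poly_DERIV] this assms(2)], of "(-1)^m"]
  have "((\<lambda>x. (-1)^m * (poly q x / poly q (-x))) has_field_derivative
           (-1)^m * ((poly (pderiv q) x * poly q (-x) + poly q x * poly (pderiv q) (-x)) / poly q (-x)^2))
         (at x within A)"
    by (rule DERIV_cong) (simp add: power2_eq_square)
  moreover have "Rm_reflected m = (\<lambda>x. (-1)^m * (poly q x / poly q (-x)))"
    by (simp add: fun_eq_iff Rm_reflected_def q_def)
  ultimately show ?thesis by simp
qed

lemma Rm_reflected_holomorphic:
  "Rm_reflected m holomorphic_on {x. poly (reflect_poly (pade_poly m)) (-x) \<noteq> 0}"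
  using Rm_reflected_has_field_derivative
  by (fastforce simp: holomorphic_on_def field_differentiable_def)

lemma Rm_reflected_0: "Rm_reflected m 0 = (-1)^m"
  by (simp add: Rm_reflected_def lead_coeff_pade_poly)

lemma deriv_Rm_reflected_0:
  assumes "m \<ge> 1"
  shows "deriv (Rm_reflected m) 0 = (-1)^m * (2 * pade_coeff m (m-1))"
proof -
  define q where "q = reflect_poly (pade_poly m)"
  have "poly (pderiv q) 0 = coeff q 1"
    by (simp add: poly_0_coeff_0 coeff_pderiv)
  also have "\<dots> = of_real (pade_coeff m (m-1))"
    using assms by (simp add: q_def coeff_reflect_poly degree_pade_poly coeff_pade_poly)
  finally have q': "poly (pderiv q) 0 = of_real (pade_coeff m (m-1))" .
  have q0: "poly q 0 = 1" by (simp add: q_def lead_coeff_pade_poly)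
  then have "pade_poly m \<noteq> 0" by (auto simp: q_def)
  have "deriv (Rm_reflected m) 0
      = (-1)^m * ((poly (pderiv q) 0 * poly q (-0) + poly q 0 * poly (pderiv q) (-0)) / poly q (-0)^2)"
    by (rule DERIV_imp_deriv) (use Rm_reflected_has_field_derivative[of m 0] q0 \<open>pade_poly m \<noteq> 0\<close> in \<open>simp add: q_def\<close>)
  also have "\<dots> = (-1)^m * (2 * pade_coeff m (m-1))"
    by (simp add: q0 q')
  finally show ?thesis .
qed

lemma Rm_tendsto_at_infinity: "(Rm m \<longlongrightarrow> (-1)^m) at_infinity"
proof -
  have "0 \<in> {x. poly (reflect_poly (pade_poly m)) (-x) \<noteq> 0}"
    by (simp add: lead_coeff_pade_poly)
  then have "isCont (Rm_reflected m) 0"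
    using holomorphic_on_imp_continuous_on[OF Rm_reflected_holomorphic] open_reflected_nonzero
      continuous_on_eq_continuous_at by blast
  then have "((\<lambda>z. Rm_reflected m (inverse z)) \<longlongrightarrow> Rm_reflected m 0) at_infinity"
    by (rule isCont_tendsto_compose) (rule tendsto_inverse_0)
  moreover have "\<forall>\<^sub>F z::complex in at_infinity. z \<noteq> 0"
    unfolding eventually_at_infinity by (intro exI[of _ 1]) auto
  then have "\<forall>\<^sub>F z in at_infinity. Rm_reflected m (inverse z) = Rm m z"
    by eventually_elim (simp add: Rm_eq_reflected inverse_eq_divide)
  ultimately show ?thesis by (simp add: Rm_reflected_0 Lim_transform_eventually)
qed

lemma branch_at_infinity:
  assumes m: "m \<ge> 1" "even m" and M: "M > 0"
  obtains Rb \<zeta> D where "M \<le> Rb" "D > 0"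
    "\<And>z t. Rb < norm z \<Longrightarrow> Pm m (-z) \<noteq> 0 \<Longrightarrow> Rm m z = exp t \<Longrightarrow> z = \<zeta> t"
    "\<forall>\<^sub>F t in at 0. Rb < norm (\<zeta> t) \<and> Pm m (- \<zeta> t) \<noteq> 0 \<and> Rm m (\<zeta> t) = exp t"
    "(\<lambda>t. \<zeta> t - of_real D / t) \<in> O[at 0](\<lambda>_. 1)"
proof -
  define S where "S = {x. poly (reflect_poly (pade_poly m)) (-x) \<noteq> 0}"
  define D where "D = 2 * pade_coeff m (m-1)"
  have D: "D > 0" unfolding D_def using pade_coeff_pos[of "m-1" m] by simp
  have F0: "Rm_reflected m 0 = 1" using m(2) by (simp add: Rm_reflected_0)
  have dF0: "deriv (Rm_reflected m) 0 = of_real D"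
    using deriv_Rm_reflected_0[OF m(1)] m(2) by (simp add: D_def)
  have "0 \<in> S" by (simp add: S_def lead_coeff_pade_poly)
  then obtain \<rho> \<eta> where \<rho>: "0 < \<rho>" "\<rho> \<le> 1 / M" "ball 0 \<rho> \<subseteq> S"
    and sol: "\<forall>\<^sub>F t in nhds 0. \<eta> t \<in> ball 0 \<rho> \<and> Rm_reflected m (\<eta> t) = exp t"
    and unique: "\<And>t x. x \<in> ball 0 \<rho> \<Longrightarrow> Rm_reflected m x = exp t \<Longrightarrow> x = \<eta> t"
    and asymp: "(\<lambda>t. \<eta> t - (0 + t / of_real D)) \<in> O[at 0](\<lambda>t. t^2)"
    using local_branch[OF open_reflected_nonzero[of m, folded S_def] _ Rm_reflected_holomorphic[of m, folded S_def]
        F0 _ , of "1 / M"] dF0 D M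
    by auto
  define Rb where "Rb = 1 / \<rho>"
  have "M \<le> Rb" using \<rho>(1,2) M by (simp add: Rb_def field_simps)
  moreover have "z = 1 / \<eta> t" if z: "Rb < norm z" "Pm m (-z) \<noteq> 0" "Rm m z = exp t" for z t
  proof -
    have "z \<noteq> 0" using z(1) \<rho>(1) by (auto simp: Rb_def)
    moreover have "norm (1 / z) < \<rho>"
      using z(1) \<rho>(1) \<open>z \<noteq> 0\<close> by (simp add: Rb_def norm_divide divide_less_eq mult.commute)
    ultimately have "1 / z = \<eta> t"
      using unique[of "1 / z" t] z(3) by (simp add: Rm_eq_reflected)
    then show ?thesis by (metis inverse_eq_divide inverse_inverse_eq)
  qed
  moreover have "\<forall>\<^sub>F t in at 0. Rb < norm (1 / \<eta> t) \<and> Pm m (- (1 / \<eta> t)) \<noteq> 0 \<and> Rm m (1 / \<eta> t) = exp t"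
    using filter_leD[OF at_within_le_nhds sol] eventually_exp_ne_one
  proof eventually_elim
    case (elim t)
    then have "\<eta> t \<noteq> 0" using F0 by auto
    moreover have "norm (\<eta> t) < \<rho>" using elim(1) by simp
    ultimately have "Rb < norm (1 / \<eta> t)"
      using \<rho>(1) by (simp add: Rb_def norm_divide field_simps)
    moreover have "Pm m (- (1 / \<eta> t)) \<noteq> 0"
      using Pm_neg_nonzero_iff_reflected[of "1 / \<eta> t" m] \<open>\<eta> t \<noteq> 0\<close> elim(1) \<rho>(3) by (auto simp: S_def)
    moreover have "Rm m (1 / \<eta> t) = exp t"
      using Rm_eq_reflected[of "1 / \<eta> t" m] \<open>\<eta> t \<noteq> 0\<close> elim(1) by simp
    ultimately show ?case by simp
  qed
  moreover have "(\<lambda>t. 1 / \<eta> t - of_real D / t) \<in> O[at 0](\<lambda>_. 1)"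
    using inverse_bigo_of_linear[of \<eta> "1 / of_real D"] asymp D by (simp add: field_simps)
  ultimately show ?thesis using that[where \<zeta> = "\<lambda>t. 1 / \<eta> t"] D by blast
qed

lemma finite_set_separation:
  fixes Z :: "complex set"
  assumes "finite Z"
  shows "\<exists>\<epsilon>>0. \<epsilon> \<le> 1 \<and> (\<forall>a\<in>Z. \<forall>b\<in>Z. a \<noteq> b \<longrightarrow> 2*\<epsilon> \<le> dist a b)"
proof -
  define D where "D = (\<lambda>(a,b). dist a b) ` {(a,b). a \<in> Z \<and> b \<in> Z \<and> a \<noteq> b}"
  have "{(a,b). a \<in> Z \<and> b \<in> Z \<and> a \<noteq> b} \<subseteq> Z \<times> Z" by auto
  then have fD: "finite D" unfolding D_def using assms by (meson finite_SigmaI finite_imageI finite_subset)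
  define \<epsilon> where "\<epsilon> = Min (insert 2 D) / 2"
  have pos: "\<forall>d\<in>insert 2 D. 0 < d" by (auto simp: D_def)
  have "0 < Min (insert 2 D)" using fD pos by (simp add: Min_gr_iff)
  moreover have "Min (insert 2 D) \<le> 2" using fD by simp
  moreover have "Min (insert 2 D) \<le> dist a b" if "a \<in> Z" "b \<in> Z" "a \<noteq> b" for a b
    using fD that by (intro Min_le) (auto simp: D_def)
  ultimately show ?thesis by (intro exI[of _ \<epsilon>]) (auto simp: \<epsilon>_def)
qed
lemma no_gauss_sols_on_compact:
  assumes K: "compact K" and no_roots: "\<And>z. z \<in> K \<Longrightarrow> Pm m z \<noteq> Pm m (-z)"
  shows "\<forall>\<^sub>F t in at 0. gauss_sols m t \<inter> K = {}"
proof -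
  define f where "f z = Pm m (-z) / (Pm m z - Pm m (-z))" for z
  have "continuous_on K f"
    unfolding f_def using no_roots
    by (auto intro!: continuous_intros continuous_on_compose2[OF continuous_on_Pm])
  then obtain C where C: "\<And>z. z \<in> K \<Longrightarrow> norm (f z) \<le> C"
    using compact_continuous_image[OF _ K] compact_imp_bounded by (fastforce simp: bounded_iff)
  have "((\<lambda>t::complex. (max C 0 + 1) * norm (exp t - 1)) \<longlongrightarrow> (max C 0 + 1) * norm (exp (0::complex) - 1)) (at 0)"
    by (intro tendsto_intros)
  then have "\<forall>\<^sub>F t::complex in at 0. (max C 0 + 1) * norm (exp t - 1) < 1"
    by (rule order_tendstoD(2)) simp
  then show ?thesis
  proof (rule eventually_mono, safe)
    fix t z assume t: "(max C 0 + 1) * norm (exp t - 1) < 1" and z: "z \<in> gauss_sols m t" "z \<in> K"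
    then have nz: "Pm m (-z) \<noteq> 0" and "Pm m z = exp t * Pm m (-z)"
      by (auto simp: gauss_sols_def Rm_def field_simps)
    then have Q: "Pm m z - Pm m (-z) = (exp t - 1) * Pm m (-z)" by (simp add: algebra_simps)
    then have "exp t \<noteq> 1" using no_roots[OF z(2)] by auto
    then have "norm (Pm m (-z)) = norm (f z) * norm (exp t - 1) * norm (Pm m (-z))"
      using nz by (simp add: f_def Q norm_divide norm_mult)
    also have "\<dots> \<le> (max C 0 + 1) * norm (exp t - 1) * norm (Pm m (-z))"
      using C[OF z(2)] by (intro mult_right_mono) auto
    also have "\<dots> < norm (Pm m (-z))"
      using t nz by simp
    finally show "z \<in> {}" by simp
  qed
qed

lemma local_branches_at_fixed_points:
  assumes m: "m \<ge> 1" and \<epsilon>: "\<epsilon> > 0"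
  obtains \<rho> \<zeta> where
    "\<And>a. Pm m a = Pm m (-a) \<Longrightarrow> 0 < \<rho> a \<and> \<rho> a \<le> \<epsilon> \<and> ball a (\<rho> a) \<subseteq> {z. Pm m (-z) \<noteq> 0}"
    "\<And>a. Pm m a = Pm m (-a) \<Longrightarrow> \<forall>\<^sub>F t in nhds 0. \<zeta> a t \<in> ball a (\<rho> a) \<and> Rm m (\<zeta> a t) = exp t"
    "\<And>a t z. Pm m a = Pm m (-a) \<Longrightarrow> z \<in> ball a (\<rho> a) \<Longrightarrow> Rm m z = exp t \<Longrightarrow> z = \<zeta> a t"
    "\<And>a. Pm m a = Pm m (-a) \<Longrightarrow> (\<lambda>t. \<zeta> a t - (a + t / deriv (Rm m) a)) \<in> O[at 0](\<lambda>t. t^2)"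
proof -
  define Q where "Q a \<rho> \<zeta> \<longleftrightarrow> 0 < \<rho> \<and> \<rho> \<le> \<epsilon> \<and> ball a \<rho> \<subseteq> {z. Pm m (-z) \<noteq> 0} \<and>
      (\<forall>\<^sub>F t in nhds 0. \<zeta> t \<in> ball a \<rho> \<and> Rm m (\<zeta> t) = exp t) \<and>
      (\<forall>t z. z \<in> ball a \<rho> \<longrightarrow> Rm m z = exp t \<longrightarrow> z = \<zeta> t) \<and>
      (\<lambda>t. \<zeta> t - (a + t / deriv (Rm m) a)) \<in> O[at 0](\<lambda>t. t^2)"
    for a \<rho> and \<zeta> :: "complex \<Rightarrow> complex"
  have "\<exists>p. Pm m a = Pm m (-a) \<longrightarrow> Q a (fst p) (snd p)" for a
  proof (cases "Pm m a = Pm m (-a)")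
    case True
    have "Pm m (-a) \<noteq> 0" using True Pm_no_common_zero[of m a] by auto
    then have a: "a \<in> {z. Pm m (-z) \<noteq> 0}" "Rm m a = 1" unfolding Rm_def True by simp_all
    obtain \<rho> \<zeta> where "0 < \<rho>" "\<rho> \<le> \<epsilon>" "ball a \<rho> \<subseteq> {z. Pm m (-z) \<noteq> 0}"
      "\<forall>\<^sub>F t in nhds 0. \<zeta> t \<in> ball a \<rho> \<and> Rm m (\<zeta> t) = exp t"
      "\<And>t z. z \<in> ball a \<rho> \<Longrightarrow> Rm m z = exp t \<Longrightarrow> z = \<zeta> t"
      "(\<lambda>t. \<zeta> t - (a + t / deriv (Rm m) a)) \<in> O[at 0](\<lambda>t. t^2)"
      using local_branch[OF open_Pm_neg_nonzero a(1) Rm_holomorphic a(2)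
          deriv_Rm_at_fixed_point_nonzero[OF m True] \<epsilon>] by blast
    then have "Q a \<rho> \<zeta>" unfolding Q_def by blast
    then show ?thesis by (intro exI[of _ "(\<rho>, \<zeta>)"]) simp
  qed simp
  then obtain p where "\<And>a. Pm m a = Pm m (-a) \<Longrightarrow> Q a (fst (p a)) (snd (p a))"
    using choice[of "\<lambda>a p. Pm m a = Pm m (-a) \<longrightarrow> Q a (fst p) (snd p)"] by blast
  then show ?thesis using that[of "\<lambda>a. fst (p a)" "\<lambda>a. snd (p a)"] unfolding Q_def by blast
qed

lemma solutions_near_infinity:
  assumes m: "m \<ge> 1" and M: "M > 0"
  obtains Rb \<zeta> where "M \<le> Rb"
    "\<And>z t. Rb < norm z \<Longrightarrow> Pm m (-z) \<noteq> 0 \<Longrightarrow> Rm m z = exp t \<Longrightarrow> norm (exp t - 1) < 1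
       \<Longrightarrow> even m \<and> z = \<zeta> t"
    "even m \<Longrightarrow> \<forall>\<^sub>F t in at 0. Rb < norm (\<zeta> t) \<and> Pm m (- \<zeta> t) \<noteq> 0 \<and> Rm m (\<zeta> t) = exp t"
    "even m \<Longrightarrow> \<exists>D>0. (\<lambda>t. \<zeta> t - of_real D / t) \<in> O[at 0](\<lambda>_. 1)"
proof (cases "even m")
  case True
  obtain Rb \<zeta> D where Rb: "M \<le> Rb" and D: "D > 0"
    and unique: "\<And>z t. Rb < norm z \<Longrightarrow> Pm m (-z) \<noteq> 0 \<Longrightarrow> Rm m z = exp t \<Longrightarrow> z = \<zeta> t"
    and sol: "\<forall>\<^sub>F t in at 0. Rb < norm (\<zeta> t) \<and> Pm m (- \<zeta> t) \<noteq> 0 \<and> Rm m (\<zeta> t) = exp t"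
    and asymp: "(\<lambda>t. \<zeta> t - of_real D / t) \<in> O[at 0](\<lambda>_. 1)"
    by (rule branch_at_infinity[OF m True M]) blast
  show ?thesis
  proof (rule that[OF Rb])
    show "even m \<and> z = \<zeta> t" if "Rb < norm z" "Pm m (-z) \<noteq> 0" "Rm m z = exp t" for z t
      using True unique[OF that] by simp
  qed (use sol asymp D in auto)
next
  case False
  text \<open>For odd \<open>m\<close>, \<open>R\<^sub>m \<rightarrow> -1\<close> at infinity, so large solutions need \<open>|e\<^sup>t - 1| \<ge> 1\<close>.\<close>
  have "(Rm m \<longlongrightarrow> -1) at_infinity" using Rm_tendsto_at_infinity[of m] False by simp
  then have "\<forall>\<^sub>F z in at_infinity. dist (Rm m z) (-1) < 1" by (rule tendstoD) simp
  then obtain b where b: "\<And>z. b \<le> norm z \<Longrightarrow> norm (Rm m z + 1) < 1"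
    unfolding eventually_at_infinity dist_norm by auto
  show ?thesis
  proof (rule that[of "max M b"])
    fix z t assume z: "max M b < norm z" "Rm m z = exp t" "norm (exp t - 1) < 1"
    have "norm (exp t + 1) < 1" using b[of z] z(1,2) by simp
    moreover have "norm ((exp t + 1) - (exp t - 1)) \<le> norm (exp t + 1) + norm (exp t - 1)"
      by (rule norm_triangle_ineq4)
    ultimately show "even m \<and> z = 0" using z(3) by simp
  qed (use False in simp_all)
qed

lemma inj_on_of_separated_balls:
  assumes sep: "\<And>a b. a \<in> Z \<Longrightarrow> b \<in> Z \<Longrightarrow> a \<noteq> b \<Longrightarrow> 2 * \<epsilon> \<le> dist a b"
    and \<rho>: "\<And>a. a \<in> Z \<Longrightarrow> \<rho> a \<le> \<epsilon>" and f: "\<And>a. a \<in> Z \<Longrightarrow> f a \<in> ball a (\<rho> a)"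
  shows "inj_on f Z"
proof (rule inj_onI, rule ccontr)
  fix a b assume ab: "a \<in> Z" "b \<in> Z" "f a = f b" "a \<noteq> b"
  have "dist a b \<le> dist a (f a) + dist (f b) b"
    using dist_triangle[of a b "f a"] ab(3) by (simp add: dist_commute)
  also have "\<dots> < \<rho> a + \<rho> b"
    using f[OF ab(1)] f[OF ab(2)] by (intro add_strict_mono) (auto simp: dist_commute)
  also have "\<dots> \<le> 2 * \<epsilon>" using \<rho>[OF ab(1)] \<rho>[OF ab(2)] by simp
  finally show False using sep[OF ab(1,2,4)] by simp
qed

lemma gauss_sols_eq_branch_values:
  assumes branch: "\<And>a. a \<in> Z \<Longrightarrow> \<zeta> a \<in> ball a (\<rho> a) \<and> Rm m (\<zeta> a) = exp t"
    and good: "\<And>a. a \<in> Z \<Longrightarrow> ball a (\<rho> a) \<subseteq> {z. Pm m (-z) \<noteq> 0}"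
    and unique: "\<And>a z. a \<in> Z \<Longrightarrow> z \<in> ball a (\<rho> a) \<Longrightarrow> Rm m z = exp t \<Longrightarrow> z = \<zeta> a"
    and far: "\<And>z. Rb < norm z \<Longrightarrow> z \<in> gauss_sols m t \<Longrightarrow> even m \<and> z = w"
    and w: "even m \<Longrightarrow> w \<in> gauss_sols m t"
    and middle: "gauss_sols m t \<inter> (cball 0 Rb - (\<Union>a\<in>Z. ball a (\<rho> a))) = {}"
  shows "gauss_sols m t = \<zeta> ` Z \<union> (if even m then {w} else {})"
proof (rule equalityI)
  show "gauss_sols m t \<subseteq> \<zeta> ` Z \<union> (if even m then {w} else {})"
  proof
    fix z assume z: "z \<in> gauss_sols m t"
    have "Rb < norm z \<or> (\<exists>a\<in>Z. z \<in> ball a (\<rho> a))"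
      using z middle by auto
    then show "z \<in> \<zeta> ` Z \<union> (if even m then {w} else {})"
    proof
      assume "\<exists>a\<in>Z. z \<in> ball a (\<rho> a)"
      then obtain a where "a \<in> Z" "z \<in> ball a (\<rho> a)" by blast
      then show ?thesis using unique z by (auto simp: gauss_sols_def)
    qed (use far z in auto)
  qed
  have "\<zeta> a \<in> gauss_sols m t" if "a \<in> Z" for a
    using branch[OF that] good[OF that] by (auto simp: gauss_sols_def)
  then show "\<zeta> ` Z \<union> (if even m then {w} else {}) \<subseteq> gauss_sols m t"
    using w by auto
qed

lemma gauss_sols_eventually_branches:
  assumes m: "m \<ge> 1"
  defines "Z \<equiv> {z. Pm m z = Pm m (-z)}"
  obtains \<zeta> \<xi> where
    "\<And>a. a \<in> Z \<Longrightarrow> (\<lambda>t. \<zeta> a t - (a + t / deriv (Rm m) a)) \<in> O[at 0](\<lambda>t. t^2)"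
    "\<And>a. a \<in> Z \<Longrightarrow> \<forall>\<^sub>F t in at 0. Rm m (\<zeta> a t) = exp t"
    "even m \<Longrightarrow> \<exists>D>0. (\<lambda>t. \<xi> t - of_real D / t) \<in> O[at 0](\<lambda>_. 1)"
    "\<forall>\<^sub>F t in at 0. inj_on (\<lambda>a. \<zeta> a t) Z \<and> (even m \<longrightarrow> \<xi> t \<notin> (\<lambda>a. \<zeta> a t) ` Z) \<and>
       gauss_sols m t = (\<lambda>a. \<zeta> a t) ` Z \<union> (if even m then {\<xi> t} else {})"
proof -
  have finZ: "finite Z"
    using poly_roots_finite[OF pade_diff_nonzero[OF m]] by (simp add: Z_def poly_pade_diff)
  obtain \<epsilon> where \<epsilon>: "\<epsilon> > 0" "\<epsilon> \<le> 1" "\<forall>a\<in>Z. \<forall>b\<in>Z. a \<noteq> b \<longrightarrow> 2*\<epsilon> \<le> dist a b"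
    using finite_set_separation[OF finZ] by blast
  obtain \<rho> \<zeta> where
    \<rho>: "\<And>a. a \<in> Z \<Longrightarrow> 0 < \<rho> a \<and> \<rho> a \<le> \<epsilon> \<and> ball a (\<rho> a) \<subseteq> {z. Pm m (-z) \<noteq> 0}" and
    sol: "\<And>a. a \<in> Z \<Longrightarrow> \<forall>\<^sub>F t in nhds 0. \<zeta> a t \<in> ball a (\<rho> a) \<and> Rm m (\<zeta> a t) = exp t" and
    unique: "\<And>a t z. a \<in> Z \<Longrightarrow> z \<in> ball a (\<rho> a) \<Longrightarrow> Rm m z = exp t \<Longrightarrow> z = \<zeta> a t" and
    asymp: "\<And>a. a \<in> Z \<Longrightarrow> (\<lambda>t. \<zeta> a t - (a + t / deriv (Rm m) a)) \<in> O[at 0](\<lambda>t. t^2)"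
    unfolding Z_def mem_Collect_eq by (rule local_branches_at_fixed_points[OF m \<epsilon>(1)]) blast
  have "bounded (\<Union>a\<in>Z. ball a (\<rho> a))" using finZ by (intro bounded_UN) auto
  then obtain M where M: "M > 0" "(\<Union>a\<in>Z. ball a (\<rho> a)) \<subseteq> ball 0 M"
    using bounded_subset_ballD by blast
  obtain Rb \<xi> where Rb: "M \<le> Rb"
    and far: "\<And>z t. Rb < norm z \<Longrightarrow> Pm m (-z) \<noteq> 0 \<Longrightarrow> Rm m z = exp t \<Longrightarrow> norm (exp t - 1) < 1
       \<Longrightarrow> even m \<and> z = \<xi> t"
    and sol_inf: "even m \<Longrightarrow> \<forall>\<^sub>F t in at 0. Rb < norm (\<xi> t) \<and> Pm m (- \<xi> t) \<noteq> 0 \<and> Rm m (\<xi> t) = exp t"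
    and asymp_inf: "even m \<Longrightarrow> \<exists>D>0. (\<lambda>t. \<xi> t - of_real D / t) \<in> O[at 0](\<lambda>_. 1)"
    by (rule solutions_near_infinity[OF m M(1)]) blast
  have "compact (cball 0 Rb - (\<Union>a\<in>Z. ball a (\<rho> a)))" by (intro compact_diff) auto
  moreover have "Pm m z \<noteq> Pm m (-z)" if z: "z \<in> cball 0 Rb - (\<Union>a\<in>Z. ball a (\<rho> a))" for z
  proof
    assume "Pm m z = Pm m (-z)"
    then have "z \<in> Z" by (simp add: Z_def)
    then have "z \<in> ball z (\<rho> z)" using \<rho> by simp
    then show False using z \<open>z \<in> Z\<close> by blast
  qed
  ultimately have middle: "\<forall>\<^sub>F t in at 0. gauss_sols m t \<inter> (cball 0 Rb - (\<Union>a\<in>Z. ball a (\<rho> a))) = {}"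
    by (rule no_gauss_sols_on_compact)
  have ev_sol: "\<forall>\<^sub>F t in at 0. \<forall>a\<in>Z. \<zeta> a t \<in> ball a (\<rho> a) \<and> Rm m (\<zeta> a t) = exp t"
    using finZ by (rule eventually_ball_finite) (use sol filter_leD[OF at_within_le_nhds] in blast)
  have ev_sol_inf: "\<forall>\<^sub>F t in at 0. even m \<longrightarrow> Rb < norm (\<xi> t) \<and> Pm m (- \<xi> t) \<noteq> 0 \<and> Rm m (\<xi> t) = exp t"
    by (cases "even m") (auto dest: sol_inf elim: eventually_mono)
  have "((\<lambda>t::complex. exp t - 1) \<longlongrightarrow> exp 0 - 1) (at 0)" by (intro tendsto_intros)
  from tendstoD[OF this, of 1]
  have ev_exp: "\<forall>\<^sub>F t::complex in at 0. norm (exp t - 1) < 1" by (simp add: dist_norm)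
  show ?thesis
  proof (rule that[of \<zeta> \<xi>])
    show "\<forall>\<^sub>F t in at 0. Rm m (\<zeta> a t) = exp t" if "a \<in> Z" for a
      using ev_sol by eventually_elim (use that in blast)
    show "\<forall>\<^sub>F t in at 0. inj_on (\<lambda>a. \<zeta> a t) Z \<and> (even m \<longrightarrow> \<xi> t \<notin> (\<lambda>a. \<zeta> a t) ` Z) \<and>
       gauss_sols m t = (\<lambda>a. \<zeta> a t) ` Z \<union> (if even m then {\<xi> t} else {})"
      using ev_sol ev_sol_inf middle ev_exp
    proof eventually_elim
      case (elim t)
      have "inj_on (\<lambda>a. \<zeta> a t) Z"
        using \<epsilon>(3) \<rho> elim(1) by (intro inj_on_of_separated_balls[of _ \<epsilon> \<rho>]) auto
      moreover have "\<xi> t \<notin> (\<lambda>a. \<zeta> a t) ` Z" if "even m"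
      proof
        assume "\<xi> t \<in> (\<lambda>a. \<zeta> a t) ` Z"
        then obtain a where "a \<in> Z" "\<xi> t = \<zeta> a t" by blast
        then have "\<xi> t \<in> ball a (\<rho> a)" using elim(1) by simp
        then have "\<xi> t \<in> ball 0 M" using M(2) \<open>a \<in> Z\<close> by blast
        then have "norm (\<xi> t) < M" by simp
        then show False using elim(2) Rb that by simp
      qed
      moreover have "gauss_sols m t = (\<lambda>a. \<zeta> a t) ` Z \<union> (if even m then {\<xi> t} else {})"
      proof (rule gauss_sols_eq_branch_values[where \<rho> = \<rho> and Rb = Rb])
        show "Rb < norm z \<Longrightarrow> z \<in> gauss_sols m t \<Longrightarrow> even m \<and> z = \<xi> t" for z
          using far elim(4) by (auto simp: gauss_sols_def)
      qed (use elim \<rho> unique in \<open>auto simp: gauss_sols_def\<close>)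
      ultimately show ?case by blast
    qed
  qed (use asymp asymp_inf in auto)
qed

lemma phase_crossing_unique:
  assumes \<phi>: "is_phase (\<lambda>y. Pm m (\<i> * of_real y)) \<phi>"
    and r: "\<And>k. k \<in> {1..L} \<Longrightarrow> 0 < r k \<and> \<phi> (r k) = real k * pi"
    and roots: "{z. Pm m z = Pm m (-z)} = labelled_root r ` {1..2*L+1}"
    and s: "0 < s" "\<phi> s = real k * pi"
  shows "s = r k"
proof -
  have "Pm m (- (\<i> * of_real s)) = Pm m (\<i> * of_real s)"
    using Pm_imag_at_phase_multiple(2)[OF \<phi> _ s(2)] s(1) by simp
  then have "\<i> * of_real s \<in> labelled_root r ` {1..2*L+1}"
    unfolding roots[symmetric] by simp
  then obtain j where j: "j \<in> {1..2*L+1}" "\<i> * of_real s = labelled_root r j" by blast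
  then have "j \<noteq> 1" using s(1) by (auto simp: labelled_root_def)
  then have half: "j div 2 \<in> {1..L}" using j(1) by auto
  have "even j"
  proof (rule ccontr)
    assume "odd j"
    then have "s = - r (j div 2)" using j(2) \<open>j \<noteq> 1\<close> by (simp add: labelled_root_def complex_eq_iff)
    then show False using s(1) r[OF half] by simp
  qed
  then have "s = r (j div 2)" using j(2) \<open>j \<noteq> 1\<close> by (simp add: labelled_root_def complex_eq_iff)
  moreover from this have "j div 2 = k" using r[OF half] s(2) by simp
  ultimately show ?thesis by simp
qed

lemma labelled_solutions:
  fixes L m :: nat
  assumes L: "2*L < m" "m \<le> 2*L + 2" and g: "inj_on g {1..2*L+1}"
    and sols: "inj_on f (g ` {1..2*L+1}) \<and> (even m \<longrightarrow> w \<notin> f ` g ` {1..2*L+1}) \<and>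
      S = f ` g ` {1..2*L+1} \<union> (if even m then {w} else {})"
  shows "inj_on (\<lambda>j. if even m \<and> j = m then w else f (g j)) {1..m} \<and>
      S = (\<lambda>j. if even m \<and> j = m then w else f (g j)) ` {1..m}"
proof -
  define h where "h = (\<lambda>j. if even m \<and> j = m then w else f (g j))"
  have fg: "inj_on (f \<circ> g) {1..2*L+1}" using g sols by (intro comp_inj_on) auto
  have h: "h j = f (g j)" if "j \<in> {1..2*L+1}" for j
    using that L by (auto simp: h_def)
  have "inj_on h {1..m} \<and> S = h ` {1..m}"
  proof (cases "even m")
    case True
    then have "{1..m} = insert m {1..2*L+1}" using L by auto
    moreover have "h m = w" using True by (simp add: h_def)
    moreover have "inj_on h {1..2*L+1}" using fg h by (auto simp: inj_on_def)
    moreover have "h ` {1..2*L+1} = f ` g ` {1..2*L+1}" using h by (auto simp: image_comp)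
    ultimately show ?thesis using sols True by auto
  next
    case False
    then have "m = 2*L + 1" using L by presburger
    then show ?thesis using fg h sols False by (auto simp: inj_on_def image_comp)
  qed
  then show ?thesis unfolding h_def .
qed

lemma pade_diff_roots_labelled:
  assumes L: "2*L < m" "m \<le> 2*L + 2"
  obtains r c where "inj_on (labelled_root r) {1..2*L+1}"
    "{z. Pm m z = Pm m (-z)} = labelled_root r ` {1..2*L+1}"
    "\<And>l. l \<in> {1..L} \<Longrightarrow> 0 < c l \<and> c l < 1 \<and> deriv (Rm m) (\<i> * of_real (r l)) = of_real (c l)
        \<and> deriv (Rm m) (- \<i> * of_real (r l)) = of_real (c l)"
proof -
  have m: "m \<ge> 1" using L by simp
  obtain \<phi> where \<phi>: "is_phase (\<lambda>y. Pm m (\<i> * of_real y)) \<phi>" using Pm_imag_phase_exists by blast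
  obtain r where r: "\<And>k. k \<in> {1..L} \<Longrightarrow> 0 < r k \<and> \<phi> (r k) = real k * pi"
    and inj: "inj_on (labelled_root r) {1..2*L+1}"
    and roots: "{z. Pm m z = Pm m (-z)} = labelled_root r ` {1..2*L+1}"
    by (rule pade_diff_roots[OF L \<phi>]) blast
  have "\<exists>c. 0 < c \<and> c < 1 \<and> deriv (Rm m) (\<i> * of_real (r l)) = of_real c
      \<and> deriv (Rm m) (- \<i> * of_real (r l)) = of_real c" if l: "l \<in> {1..L}" for l
  proof -
    have rl: "0 < r l" "\<phi> (r l) = real l * pi" using r[OF l] by auto
    show ?thesis
    proof (rule deriv_Rm_at_imag_root[OF m \<phi> rl])
      show "2 * l < m" using l L by simp
      show "s = r l" if "0 < s" "\<phi> s = real l * pi" for s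
        by (rule phase_crossing_unique[OF \<phi> r roots that])
    qed auto
  qed
  then obtain c where "\<forall>l\<in>{1..L}. 0 < c l \<and> c l < 1 \<and> deriv (Rm m) (\<i> * of_real (r l)) = of_real (c l)
      \<and> deriv (Rm m) (- \<i> * of_real (r l)) = of_real (c l)"
    by (metis (no_types) bchoice)
  then show ?thesis using that[OF inj roots] by blast
qed

lemma deriv_Rm_0: "m \<ge> 1 \<Longrightarrow> deriv (Rm m) 0 = 1"
  using deriv_Rm_at_fixed_point[of m 0] Pm_at_0_nonzero by simp

lemma gauss_sols_labelled_branches:
  assumes L: "2*L < m" "m \<le> 2*L + 2" and inj: "inj_on (labelled_root r) {1..2*L+1}"
    and roots: "{z. Pm m z = Pm m (-z)} = labelled_root r ` {1..2*L+1}"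
  obtains zh D where
    "\<forall>\<^sub>F t in at 0. inj_on (\<lambda>j. zh j t) {1..m} \<and> gauss_sols m t = (\<lambda>j. zh j t) ` {1..m}"
    "\<And>j. j \<in> {1..2*L+1} \<Longrightarrow>
       (\<lambda>t. zh j t - (labelled_root r j + t / deriv (Rm m) (labelled_root r j))) \<in> O[at 0](\<lambda>t. t^2)"
    "\<forall>\<^sub>F t in at 0. Rm m (zh 1 t) = exp t"
    "even m \<Longrightarrow> D > 0 \<and> (\<lambda>t. zh m t - of_real D / t) \<in> O[at 0](\<lambda>_. 1)"
proof -
  have m: "m \<ge> 1" using L by simp
  obtain \<zeta> \<xi> where asymp: "\<And>a. a \<in> labelled_root r ` {1..2*L+1} \<Longrightarrow>
        (\<lambda>t. \<zeta> a t - (a + t / deriv (Rm m) a)) \<in> O[at 0](\<lambda>t. t^2)"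
    and sol: "\<And>a. a \<in> labelled_root r ` {1..2*L+1} \<Longrightarrow> \<forall>\<^sub>F t in at 0. Rm m (\<zeta> a t) = exp t"
    and asymp_inf: "even m \<Longrightarrow> \<exists>D>0. (\<lambda>t. \<xi> t - of_real D / t) \<in> O[at 0](\<lambda>_. 1)"
    and branches: "\<forall>\<^sub>F t in at 0. inj_on (\<lambda>a. \<zeta> a t) (labelled_root r ` {1..2*L+1}) \<and>
       (even m \<longrightarrow> \<xi> t \<notin> (\<lambda>a. \<zeta> a t) ` labelled_root r ` {1..2*L+1}) \<and>
       gauss_sols m t = (\<lambda>a. \<zeta> a t) ` labelled_root r ` {1..2*L+1} \<union> (if even m then {\<xi> t} else {})"
    by (rule gauss_sols_eventually_branches[OF m, unfolded roots]) blast
  obtain D where D: "even m \<Longrightarrow> D > 0 \<and> (\<lambda>t. \<xi> t - of_real D / t) \<in> O[at 0](\<lambda>_. 1)"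
    using asymp_inf by metis
  define zh where "zh j t = (if even m \<and> j = m then \<xi> t else \<zeta> (labelled_root r j) t)" for j t
  have "zh j = \<zeta> (labelled_root r j)" if "j \<in> {1..2*L+1}" for j
    using that L by (auto simp: zh_def fun_eq_iff)
  moreover have "\<forall>\<^sub>F t in at 0. inj_on (\<lambda>j. zh j t) {1..m} \<and> gauss_sols m t = (\<lambda>j. zh j t) ` {1..m}"
    unfolding zh_def by (rule eventually_mono[OF branches labelled_solutions[OF L inj]])
  moreover have "1 \<in> {1..2*L+1}" by simp
  ultimately show ?thesis
    using that[of zh D] asymp sol D by (simp add: zh_def)
qed

theorem proposition4:
  fixes m :: nat
  assumes "m \<ge> 1"
  shows "\<exists>(zh :: nat \<Rightarrow> complex \<Rightarrow> complex) (r :: nat \<Rightarrow> real) (\<delta> :: nat \<Rightarrow> real).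
     (\<forall>\<^sub>F t in at (0::complex).
        inj_on (\<lambda>j. zh j t) {1..m} \<and> gauss_sols m t = (\<lambda>j. zh j t) ` {1..m})
   \<and> (\<lambda>t. zh 1 t - t) \<in> O[at 0](\<lambda>t. t ^ (2*m+1))
   \<and> (\<forall>l\<in>{1..(m+1) div 2 - 1}.
        \<delta> l > 1
      \<and> (\<lambda>t. zh (2*l) t - (\<i> * of_real (r l) + of_real (\<delta> l) * t)) \<in> O[at 0](\<lambda>t. t ^ 2)
      \<and> (\<lambda>t. zh (2*l+1) t - (- \<i> * of_real (r l) + of_real (\<delta> l) * t)) \<in> O[at 0](\<lambda>t. t ^ 2))
   \<and> (even m \<longrightarrow> (\<exists>D::real. D > 0 \<and>
        (\<lambda>t. zh m t - of_real D / t) \<in> O[at 0](\<lambda>_. 1)))"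
proof -
  define L where "L = (m + 1) div 2 - 1"
  have L: "2*L < m" "m \<le> 2*L + 2" using assms unfolding L_def by presburger+
  obtain r c where inj: "inj_on (labelled_root r) {1..2*L+1}"
    and roots: "{z. Pm m z = Pm m (-z)} = labelled_root r ` {1..2*L+1}"
    and c: "\<And>l. l \<in> {1..L} \<Longrightarrow> 0 < c l \<and> c l < 1 \<and> deriv (Rm m) (\<i> * of_real (r l)) = of_real (c l)
        \<and> deriv (Rm m) (- \<i> * of_real (r l)) = of_real (c l)"
    by (rule pade_diff_roots_labelled[OF L]) blast
  obtain zh D where sols: "\<forall>\<^sub>F t in at 0. inj_on (\<lambda>j. zh j t) {1..m} \<and> gauss_sols m t = (\<lambda>j. zh j t) ` {1..m}"
    and asymp: "\<And>j. j \<in> {1..2*L+1} \<Longrightarrow>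
       (\<lambda>t. zh j t - (labelled_root r j + t / deriv (Rm m) (labelled_root r j))) \<in> O[at 0](\<lambda>t. t^2)"
    and zh1: "\<forall>\<^sub>F t in at 0. Rm m (zh 1 t) = exp t"
    and pole: "even m \<Longrightarrow> D > 0 \<and> (\<lambda>t. zh m t - of_real D / t) \<in> O[at 0](\<lambda>_. 1)"
    by (rule gauss_sols_labelled_branches[OF L inj roots]) blast
  have "(\<lambda>t. zh 1 t - t) \<in> O[at 0](\<lambda>t. t ^ (2*m+1))"
    using branch_at_zero_bigo[OF assms _ zh1] asymp[of 1] deriv_Rm_0[OF assms]
    by (simp add: labelled_root_def)
  moreover have "\<forall>l\<in>{1..(m+1) div 2 - 1}. 1 < 1 / c l
      \<and> (\<lambda>t. zh (2*l) t - (\<i> * of_real (r l) + of_real (1 / c l) * t)) \<in> O[at 0](\<lambda>t. t ^ 2)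
      \<and> (\<lambda>t. zh (2*l+1) t - (- \<i> * of_real (r l) + of_real (1 / c l) * t)) \<in> O[at 0](\<lambda>t. t ^ 2)"
  proof
    fix l assume "l \<in> {1..(m+1) div 2 - 1}"
    then have l: "l \<in> {1..L}" by (simp add: L_def)
    show "1 < 1 / c l
      \<and> (\<lambda>t. zh (2*l) t - (\<i> * of_real (r l) + of_real (1 / c l) * t)) \<in> O[at 0](\<lambda>t. t ^ 2)
      \<and> (\<lambda>t. zh (2*l+1) t - (- \<i> * of_real (r l) + of_real (1 / c l) * t)) \<in> O[at 0](\<lambda>t. t ^ 2)"
      using c[OF l] asymp[of "2*l"] asymp[of "2*l+1"] l by (simp add: labelled_root_def)
  qed
  ultimately show ?thesis
    using sols pole by (intro exI[of _ zh] exI[of _ r] exI[of _ "\<lambda>l. 1 / c l"]) auto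
qed

end
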